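(* Under Assumption 1, there exist constants $c_1,c_2>0$, depending only on the problem data ($A,b,C,c$, the $f_i$ and $W$), such that for every $\lambda\in\mathbb{D}$, \[ \|\lambda-\bar\lambda\|_W\ \le\ \big(c_1+c_2\,\mathcal T(\lambda)^2\big)\,\|\nabla^+ d(\lambda)\|_W , \] where $\bar\lambda=[\lambda]^W_{\Lambda^*}$.
   Context: Standing setup. Consider $\min_{z}\ f(z)=\sum_{i=1}^M f_i(z_i)$ subject to $Az=b$, $Cz\le c$, where $z=(z_1,\dots,z_M)$, $z_i\in\mathbb{R}^{n_i}$, $n=\sum_i n_i$, $A\in\mathbb{R}^{p\times n}$, $C\in\mathbb{R}^{q\times n}$, $b\in\mathbb{R}^p$, $c\in\mathbb{R}^q$, and each $f_i:\mathbb{R}^{n_i}\to\mathbb{R}$ is convex. The rows are partitioned into $\bar M$ blocks: $A$ has blocks $A_{ji}\in\mathbb{R}^{p_j\times n_i}$ and $C$ has blocks $C_{ji}\in\mathbb{R}^{q_j\times n_i}$. A matrix $E\in\{0,1\}^{\bar M\times M}$ is given such that $E_{ji}=0$ implies $A_{ji}=0$ and $C_{ji}=0$; $\bar{\mathcal N}_i=\{j: E_{ji}\neq 0\}$, $\mathcal N_j=\{i:E_{ji}\ne 0\}$. Let $G=\begin{bmatrix}A\\ C\end{bmatrix}$, $g=\begin{bmatrix}b\\ c\end{bmatrix}$, $\lambda=(\nu,\mu)$, $\mathbb{D}=\mathbb{R}^p\times\mathbb{R}^q_+$, $\mathcal L(z,\lambda)=f(z)+\langle\lambda,Gz-g\rangle$,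 $d(\lambda)=\min_{z}\mathcal L(z,\lambda)$, $\nabla d(\lambda)=Gz(\lambda)-g$ with $z(\lambda)$ the unique minimizer of $\mathcal L(\cdot,\lambda)$. $L_{d_i}=\big\|\begin{bmatrix}[A_{ji}]_{j\in\bar{\mathcal N}_i}\\ [C_{ji}]_{j\in\bar{\mathcal N}_i}\end{bmatrix}\big\|^2/\sigma_i$; $W=\mathrm{diag}(W_\nu,W_\mu)$, $W_\nu=\mathrm{diag}\big(\sum_{i\in\mathcal N_j}L_{d_i}I_{p_j};\ j\big)$, $W_\mu=\mathrm{diag}\big(\sum_{i\in\mathcal N_j}L_{d_i}I_{q_j};\ j\big)$, assumed positive definite; $\|x\|_W=\sqrt{x^TWx}$. Assumption 1: (a) each $f_i$ is $\sigma_i$-strongly convex and has $L_i$-Lipschitz gradient (Euclidean norm); (b) $A$ has full row rank and there is $\tilde z$ with $A\tilde z=b$, $C\tilde z<c$. Under Assumption 1 the set $\Lambda^*$ of maximizers of $d$ over $\mathbb{D}$ is nonempty, convex and bounded, and $\max_{\mathbb D} d=f^*$ (the primal optimal value). Notation: $[x]^W_S$ denotes the projection of $x$ onto a closed convex set $S$ with respect to $\|\cdot\|_W$. The proximal residual is $\nabla^+ d(\lambda)=[\lambda+W^{-1}\nabla d(\lambda)]^W_{\mathbb D}-\lambda$ for $\lambda\in\mathbb D$. $\mathcal T(\lambda)=\max_{\lambda^*\in\Lambda^*}\|\lambda-\lambda^*\|_W$. *)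

theory Defs
  imports "HOL-Analysis.Analysis"
begin

text \<open>
Primal variable z :: real^'n; the coordinates are partitioned into
primal blocks by blk :: 'n => 'm (block i = coordinates c with blk c = i, so
z_i in R^{n_i}).  The constraint rows (rows of G = [A; C]) are indexed by 'r;
eqr r = True marks rows of A (equalities), eqr r = False rows of C
(inequalities).  Rows are partitioned into dual blocks by rblk :: 'r => 'k.
A function f_i : R^{n_i} -> R is represented by its lifting F i : real^'n => real,
which depends only on the coordinates of block i.
\<close>

definition blockproj :: "('n \<Rightarrow> 'm) \<Rightarrow> 'm \<Rightarrow> real^'n \<Rightarrow> real^'n" where
  "blockproj blk i x = (\<chi> c. if blk c = i then x $ c else 0)"

definition depends_only_on_block :: "('n \<Rightarrow> 'm) \<Rightarrow> 'm \<Rightarrow> (real^'n \<Rightarrow> real) \<Rightarrow> bool" where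
  "depends_only_on_block blk i F \<longleftrightarrow>
     (\<forall>x y. blockproj blk i x = blockproj blk i y \<longrightarrow> F x = F y)"

definition block_strongly_convex ::
  "('n \<Rightarrow> 'm) \<Rightarrow> 'm \<Rightarrow> real \<Rightarrow> (real^'n \<Rightarrow> real) \<Rightarrow> bool" where
  "block_strongly_convex blk i \<sigma> F \<longleftrightarrow>
     convex_on UNIV (\<lambda>x. F x - \<sigma> / 2 * (norm (blockproj blk i x))\<^sup>2)"

definition lipschitz_gradient :: "real \<Rightarrow> (real^'n \<Rightarrow> real) \<Rightarrow> bool" where
  "lipschitz_gradient L F \<longleftrightarrow>
     (\<exists>gr. (\<forall>x. (F has_derivative (\<lambda>h. gr x \<bullet> h)) (at x)) \<and>
           (\<forall>x y. norm (gr x - gr y) \<le> L * norm (x - y)))"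

definition fobj :: "('m::finite \<Rightarrow> real^'n \<Rightarrow> real) \<Rightarrow> real^'n \<Rightarrow> real" where
  "fobj F z = (\<Sum>i\<in>UNIV. F i z)"

definition lagr :: "('m::finite \<Rightarrow> real^'n \<Rightarrow> real) \<Rightarrow> real^'n^'r \<Rightarrow> real^'r
                    \<Rightarrow> real^'n \<Rightarrow> real^'r \<Rightarrow> real" where
  "lagr F G g z l = fobj F z + l \<bullet> (G *v z - g)"

definition dualf :: "('m::finite \<Rightarrow> real^'n \<Rightarrow> real) \<Rightarrow> real^'n^'r \<Rightarrow> real^'r
                    \<Rightarrow> real^'r \<Rightarrow> real" where
  "dualf F G g l = (INF z. lagr F G g z l)"

definition zopt :: "('m::finite \<Rightarrow> real^'n \<Rightarrow> real) \<Rightarrow> real^'n^'r \<Rightarrow> real^'r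
                    \<Rightarrow> real^'r \<Rightarrow> real^'n" where
  "zopt F G g l = (THE z. \<forall>z'. lagr F G g z l \<le> lagr F G g z' l)"

definition graddual :: "('m::finite \<Rightarrow> real^'n \<Rightarrow> real) \<Rightarrow> real^'n^'r \<Rightarrow> real^'r
                    \<Rightarrow> real^'r \<Rightarrow> real^'r" where
  "graddual F G g l = G *v zopt F G g l - g"

definition dualset :: "('r \<Rightarrow> bool) \<Rightarrow> (real^'r) set" where
  "dualset eqr = {l. \<forall>r. \<not> eqr r \<longrightarrow> 0 \<le> l $ r}"

definition dualopt :: "('m::finite \<Rightarrow> real^'n \<Rightarrow> real) \<Rightarrow> real^'n^'r \<Rightarrow> real^'r
                    \<Rightarrow> ('r \<Rightarrow> bool) \<Rightarrow> (real^'r) set" where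
  "dualopt F G g eqr = {l \<in> dualset eqr. \<forall>l' \<in> dualset eqr. dualf F G g l' \<le> dualf F G g l}"

text \<open>L_{d_i} = || [A_ji; C_ji]_{j in Nbar_i} ||^2 / sigma_i  (spectral norm, realised as
  the operator norm of the submatrix padded with zeros).\<close>
definition Ldi :: "real^'n^'r \<Rightarrow> ('n \<Rightarrow> 'm) \<Rightarrow> ('r \<Rightarrow> 'k) \<Rightarrow> ('k \<Rightarrow> 'm \<Rightarrow> bool)
                  \<Rightarrow> ('m \<Rightarrow> real) \<Rightarrow> 'm \<Rightarrow> real" where
  "Ldi G blk rblk E \<sigma> i =
     (onorm (\<lambda>x::real^'n. (\<chi> r. if E (rblk r) i then (G *v blockproj blk i x) $ r else 0)
               :: real^'r))\<^sup>2 / \<sigma> i"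

definition Wdiag :: "real^'n^'r \<Rightarrow> ('n \<Rightarrow> 'm::finite) \<Rightarrow> ('r \<Rightarrow> 'k) \<Rightarrow> ('k \<Rightarrow> 'm \<Rightarrow> bool)
                  \<Rightarrow> ('m \<Rightarrow> real) \<Rightarrow> 'r \<Rightarrow> real" where
  "Wdiag G blk rblk E \<sigma> r = (\<Sum>i \<in> {i. E (rblk r) i}. Ldi G blk rblk E \<sigma> i)"

definition wnorm :: "('r::finite \<Rightarrow> real) \<Rightarrow> real^'r \<Rightarrow> real" where
  "wnorm w x = sqrt (\<Sum>r\<in>UNIV. w r * (x $ r)\<^sup>2)"

definition wproj :: "('r::finite \<Rightarrow> real) \<Rightarrow> (real^'r) set \<Rightarrow> real^'r \<Rightarrow> real^'r" where
  "wproj w S x = (THE y. y \<in> S \<and> (\<forall>y'\<in>S. wnorm w (x - y) \<le> wnorm w (x - y')))"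

definition winv :: "('r::finite \<Rightarrow> real) \<Rightarrow> real^'r \<Rightarrow> real^'r" where
  "winv w v = (\<chi> r. v $ r / w r)"

definition proxres :: "('r::finite \<Rightarrow> real) \<Rightarrow> ('r \<Rightarrow> bool) \<Rightarrow> (real^'r \<Rightarrow> real^'r)
                       \<Rightarrow> real^'r \<Rightarrow> real^'r" where
  "proxres w eqr gd l = wproj w (dualset eqr) (l + winv w (gd l)) - l"

definition Tfun :: "('r::finite \<Rightarrow> real) \<Rightarrow> (real^'r) set \<Rightarrow> real^'r \<Rightarrow> real" where
  "Tfun w S l = (SUP s\<in>S. wnorm w (l - s))"

end

theory Submission
  imports Defs
begin

text \<open>
  Slater's condition and full row
      rank of \<open>A\<close> make the superlevel sets of \<open>d\<close> bounded, so \<open>\<Lambda>*\<close> is nonempty and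
      bounded, and \<open>z(\<lambda>) = z*\<close> is constant on \<open>\<Lambda>*\<close>.
  (3) \<open>\<Lambda>*\<close> is the polyhedron \<open>{\<mu> \<in> D. \<mu>\<^sup>TG = q*, \<mu>\<^sub>r = 0 for r \<in> I\<^sub>0}\<close> where \<open>I\<^sub>0\<close>
      collects the strictly inactive inequalities; a Hoffman-type bound controls
      the distance to it.
  (4) The error bound (locale \<open>weighted_dual_problem\<close>) by cases on the size of
      \<open>r(\<lambda>)\<close> and of \<open>\<parallel>z(\<lambda>) - z*\<parallel>\<close>: if the residual is large the bound is trivial;
      if \<open>z(\<lambda>)\<close> is far from \<open>z*\<close>, strong monotonicity forces a residual of order
      \<open>1/\<T>(\<lambda>)\<close>;
      if it is close, the rows in \<open>I\<^sub>0\<close> are inactive at \<open>[\<lambda> + W\<^sup>-\<^sup>1\<nabla>d(\<lambda>)]\<^sub>D\<close> up to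
      \<open>O(\<parallel>r(\<lambda>)\<parallel>)\<close> and the Hoffman bound applies.
  The sparsity pattern and the separability of the \<open>f\<^sub>i\<close> only enter through \<open>W \<succ> 0\<close>.
\<close>

lemma norm_sq_vec: "(norm (x::real^'r))\<^sup>2 = (\<Sum>i\<in>UNIV. (x$i)\<^sup>2)"
  by (simp add: norm_vec_def L2_set_def sum_nonneg)

lemma inner_vec_real: "inner (x::real^'r) y = (\<Sum>i\<in>UNIV. x$i * y$i)"
  by (simp add: inner_vec_def)

lemma inner_unit_vec: "(x::real^'r::finite) \<bullet> (\<chi> i. if i = r then c else 0) = x $ r * c"
  by (simp add: inner_vec_real if_distrib[of "\<lambda>v. x$_ * v"] cong: if_cong)

lemma vector_matrix_mult_lin:
  "(a *\<^sub>R x + b *\<^sub>R y) v* (G::real^'n::finite^'r::finite) = a *\<^sub>R (x v* G) + b *\<^sub>R (y v* G)"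
proof -
  have "transpose G *v (a *\<^sub>R x + b *\<^sub>R y) = a *\<^sub>R (transpose G *v x) + b *\<^sub>R (transpose G *v y)"
    by (simp add: matrix_vector_right_distrib matrix_vector_mult_scaleR)
  then show ?thesis by simp
qed

lemma matrix_onorm_bound: "norm ((A::real^'n::finite^'m::finite) *v x) \<le> onorm ((*v) A) * norm x"
  by (rule onorm[OF matrix_vector_mul_bounded_linear])

lemma le_of_le_plus_vanishing:
  fixes a b K :: real
  assumes le: "\<And>t. 0 < t \<Longrightarrow> t \<le> 1 \<Longrightarrow> a \<le> b + t * K"
  shows "a \<le> b"
proof (rule field_le_epsilon)
  fix e :: real assume e: "e > 0"
  define t where "t = min 1 (e / (\<bar>K\<bar> + 1))"
  have t: "0 < t" "t \<le> 1" using e by (auto simp: t_def)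
  have "t * K \<le> t * (\<bar>K\<bar> + 1)" using t by (intro mult_left_mono) auto
  also have "\<dots> \<le> e"
  proof -
    have "t \<le> e / (\<bar>K\<bar> + 1)" by (simp add: t_def)
    then show ?thesis by (simp add: pos_le_divide_eq)
  qed
  finally show "a \<le> b + e" using le[OF t] by linarith
qed

text \<open>A continuous positively homogeneous function that is positive on a closed
  cone \<open>C\<close> (minus the origin) dominates a multiple of the norm on \<open>C\<close>: minimise it
  over the compact set \<open>C \<inter> S\<^sup>n\<^sup>-\<^sup>1\<close>.\<close>
lemma positively_homogeneous_lower_bound:
  fixes \<phi> :: "'a::euclidean_space \<Rightarrow> real"
  assumes C: "closed C" and cone: "\<And>x t. x \<in> C \<Longrightarrow> t > 0 \<Longrightarrow> t *\<^sub>R x \<in> C"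
    and cont: "continuous_on UNIV \<phi>" and hom: "\<And>x t. t > 0 \<Longrightarrow> \<phi> (t *\<^sub>R x) = t * \<phi> x"
    and pos: "\<And>x. x \<in> C \<Longrightarrow> x \<noteq> 0 \<Longrightarrow> \<phi> x > 0"
  shows "\<exists>c>0. \<forall>x\<in>C. c * norm x \<le> \<phi> x"
proof -
  let ?K = "C \<inter> sphere 0 1"
  have phi0: "\<phi> 0 = 0" using hom[of 2 0] by simp
  have scale: "c * norm x \<le> \<phi> x" if x: "x \<in> C" and h: "\<And>u. u \<in> ?K \<Longrightarrow> c \<le> \<phi> u" for x c
  proof (cases "x = 0")
    case True then show ?thesis using phi0 by simp
  next
    case False
    then have np: "norm x > 0" by simp
    have u: "(1/norm x) *\<^sub>R x \<in> ?K" using x cone[of x "1/norm x"] np by simp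
    have "\<phi> x = norm x * \<phi> ((1/norm x) *\<^sub>R x)"
      using hom[of "norm x" "(1/norm x) *\<^sub>R x"] np by simp
    then show ?thesis using h[OF u] np by (simp add: mult.commute)
  qed
  show ?thesis
  proof (cases "?K = {}")
    case True
    have "1 * norm x \<le> \<phi> x" if "x \<in> C" for x
      by (rule scale[OF that]) (use True in blast)
    then show ?thesis by (intro exI[of _ 1]) auto
  next
    case False
    have "compact ?K" using C by (simp add: closed_Int_compact)
    then obtain m where m: "m \<in> ?K" "\<forall>y\<in>?K. \<phi> m \<le> \<phi> y"
      using continuous_attains_inf[OF _ False continuous_on_subset[OF cont]] by blast
    have "\<phi> m * norm x \<le> \<phi> x" if "x \<in> C" for x
      by (rule scale[OF that]) (use m in blast)
    moreover have "\<phi> m > 0"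
    proof -
      have "m \<noteq> 0" using m by auto
      then show ?thesis using m pos by auto
    qed
    ultimately show ?thesis by blast
  qed
qed

subsection \<open>Strongly convex functions\<close>

definition strongly_convex_fun :: "('a::real_inner \<Rightarrow> real) \<Rightarrow> real \<Rightarrow> bool" where
  "strongly_convex_fun h s \<longleftrightarrow> (\<forall>a b t. 0 \<le> t \<longrightarrow> t \<le> 1 \<longrightarrow>
     h ((1-t) *\<^sub>R a + t *\<^sub>R b) \<le> (1-t) * h a + t * h b - s/2 * t * (1-t) * (norm (a - b))\<^sup>2)"

text \<open>The parallelogram-type identity that turns convexity of \<open>h - s/2\<parallel>\<cdot>\<parallel>\<^sup>2\<close> into
  the three-point form.\<close>
lemma norm_sq_convex_comb:
  fixes u v :: "'a::real_inner"
  shows "(norm ((1-t) *\<^sub>R u + t *\<^sub>R v))\<^sup>2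
           = (1-t)*(norm u)\<^sup>2 + t*(norm v)\<^sup>2 - t*(1-t)*(norm (u - v))\<^sup>2"
  by (simp add: power2_norm_eq_inner inner_add inner_diff inner_scaleR inner_commute algebra_simps)

lemma strongly_convex_min_growth:
  assumes sc: "strongly_convex_fun h s" and min: "\<forall>y. h z \<le> h y"
  shows "h z + s/2 * (norm (y - z))\<^sup>2 \<le> h y"
proof (rule le_of_le_plus_vanishing)
  fix t :: real assume t: "0 < t" "t \<le> 1"
  define D where "D = s/2 * (norm (y - z))\<^sup>2"
  have "h z \<le> h ((1-t) *\<^sub>R z + t *\<^sub>R y)" using min by blast
  also have "\<dots> \<le> (1-t) * h z + t * h y - s/2 * t * (1-t) * (norm (z - y))\<^sup>2"
    using sc t unfolding strongly_convex_fun_def by auto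
  finally have "t * h z \<le> t * h y - t * ((1-t) * D)"
    by (simp add: D_def norm_minus_commute algebra_simps)
  then have "h z \<le> h y - (1-t) * D" using t
    by (simp add: right_diff_distrib[symmetric] mult_le_cancel_left_pos)
  then show "h z + D \<le> h y + t * D" by (simp add: algebra_simps)
qed

lemma strongly_convex_min_unique:
  assumes sc: "strongly_convex_fun h s" and s: "s > 0"
    and m1: "\<forall>y. h z1 \<le> h y" and m2: "\<forall>y. h z2 \<le> h y"
  shows "z1 = z2"
proof -
  have "h z1 + s/2 * (norm (z2 - z1))\<^sup>2 \<le> h z2" by (rule strongly_convex_min_growth[OF sc m1])
  moreover have "h z2 \<le> h z1" using m2 by blast
  ultimately have "(norm (z2 - z1))\<^sup>2 \<le> 0" using s
    by (smt (verit, del_insts) divide_pos_pos mult_pos_pos zero_less_power2)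
  then show ?thesis by simp
qed

text \<open>Coercivity: if \<open>h \<ge> c\<close> on the unit sphere, comparing \<open>h\<close> on the segment from
  \<open>0\<close> to \<open>y\<close> shows that \<open>h\<close> exceeds \<open>h(0)\<close> outside an explicit ball.\<close>
lemma strongly_convex_exceeds_origin:
  assumes sc: "strongly_convex_fun h s" and s: "s > 0"
    and on_sphere: "\<forall>u. norm u = 1 \<longrightarrow> c \<le> h u"
    and y: "norm y \<ge> 2 + 2 * \<bar>c - h 0\<bar> / s"
  shows "h 0 < h y"
proof -
  define r where "r = norm y"
  have "2 * \<bar>c - h 0\<bar> / s \<ge> 0" using s by simp
  then have r1: "r > 1" using y by (simp add: r_def)
  define t where "t = 1 / r"
  have t0: "0 \<le> t" "t \<le> 1" using r1 by (auto simp: t_def)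
  have u: "norm (t *\<^sub>R y) = 1" using r1 by (auto simp: t_def r_def)
  have "h (t *\<^sub>R y) = h ((1-t) *\<^sub>R 0 + t *\<^sub>R y)" by simp
  also have "\<dots> \<le> (1-t) * h 0 + t * h y - s/2 * t * (1-t) * (norm (0 - y))\<^sup>2"
    using sc t0 unfolding strongly_convex_fun_def by blast
  finally have "c \<le> (1-t) * h 0 + t * h y - s/2 * t * (1-t) * r\<^sup>2"
    using on_sphere[rule_format, OF u] by (simp add: r_def)
  then have "r * c \<le> r * ((1-t) * h 0 + t * h y - s/2 * t * (1-t) * r\<^sup>2)"
    using r1 by (simp add: mult_left_mono)
  also have "\<dots> = (r - 1) * h 0 + h y - s/2 * (r - 1) * r"
    using r1 by (simp add: t_def field_simps power2_eq_square)
  finally have A: "r * c \<le> (r - 1) * h 0 + h y - s/2 * (r - 1) * r" .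
  have "r - 1 \<ge> 1 + 2 * \<bar>c - h 0\<bar> / s" using y r_def by simp
  then have "s/2 * (r - 1) \<ge> s/2 + \<bar>c - h 0\<bar>" using s by (simp add: field_simps)
  then have "s/2 * (r-1) * r \<ge> (s/2 + \<bar>c - h 0\<bar>) * r" using r1 by (simp add: mult_right_mono)
  then have "h y \<ge> r * c - (r - 1) * h 0 + (s/2 + \<bar>c - h 0\<bar>) * r" using A by linarith
  moreover have "r * c - (r - 1) * h 0 + (s/2 + \<bar>c - h 0\<bar>) * r
      = h 0 + r * ((c - h 0) + \<bar>c - h 0\<bar>) + s/2 * r" by (simp add: algebra_simps)
  moreover have "r * ((c - h 0) + \<bar>c - h 0\<bar>) \<ge> 0" using r1 by (intro mult_nonneg_nonneg) auto
  moreover have "s/2 * r > 0" using s r1 by simp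
  ultimately show ?thesis by linarith
qed

text \<open>Existence of the minimiser: minimise over the ball outside of which \<open>h > h(0)\<close>.\<close>
lemma strongly_convex_min_exists:
  fixes h :: "'a::euclidean_space \<Rightarrow> real"
  assumes sc: "strongly_convex_fun h s" and s: "s > 0" and cont: "continuous_on UNIV h"
  shows "\<exists>z. \<forall>y. h z \<le> h y"
proof -
  have "sphere (0::'a) 1 \<noteq> {}"
    using vector_choose_size[of 1] by (auto simp: sphere_def)
  then obtain m where "\<forall>u\<in>sphere (0::'a) 1. h m \<le> h u"
    using continuous_attains_inf[OF compact_sphere _ continuous_on_subset[OF cont]] by blast
  then have on_sphere: "\<forall>u. norm u = 1 \<longrightarrow> h m \<le> h u" by simp
  define R where "R = 2 + 2 * \<bar>h m - h 0\<bar> / s"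
  have R0: "R \<ge> 0" using s by (simp add: R_def)
  have cb: "compact (cball (0::'a) R)" "cball (0::'a) R \<noteq> {}" using R0 by auto
  obtain z where z: "z \<in> cball 0 R" "\<forall>y\<in>cball 0 R. h z \<le> h y"
    using continuous_attains_inf[OF cb continuous_on_subset[OF cont]] by blast
  have "h z \<le> h y" for y
  proof (cases "norm y \<le> R")
    case True then show ?thesis using z by simp
  next
    case False
    then have "2 + 2 * \<bar>h m - h 0\<bar> / s \<le> norm y" unfolding R_def by linarith
    then have "h 0 < h y" by (rule strongly_convex_exceeds_origin[OF sc s on_sphere])
    then show ?thesis using z(2)[rule_format, of 0] R0 by simp
  qed
  then show ?thesis by blast
qed

subsection \<open>Weighted norms and projections\<close>

text \<open>\<open>\<parallel>x\<parallel>\<^sub>W = \<parallel>W\<^sup>1\<^sup>/\<^sup>2x\<parallel>\<close>: the change of variables reducing W-geometry to Euclidean geometry.\<close>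
definition wscale :: "('r::finite \<Rightarrow> real) \<Rightarrow> real^'r \<Rightarrow> real^'r" where
  "wscale w x = (\<chi> r. sqrt (w r) * x$r)"

lemma wscale_linear: "linear (wscale w)"
  by (rule linearI) (simp_all add: wscale_def vec_eq_iff algebra_simps)

lemma wscale_inj: "(\<forall>r. w r > 0) \<Longrightarrow> inj (wscale w)"
  by (auto simp: inj_def wscale_def vec_eq_iff) (metis less_irrefl)

lemma wnorm_wscale: "(\<forall>r. w r \<ge> 0) \<Longrightarrow> wnorm w x = norm (wscale w x)"
  by (simp add: wnorm_def norm_vec_def L2_set_def wscale_def power_mult_distrib)

lemma wnorm_nonneg: "(\<forall>r. w r \<ge> 0) \<Longrightarrow> wnorm w x \<ge> 0"
  by (simp add: wnorm_def sum_nonneg)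

lemma wnorm_le:
  assumes "\<forall>r. w r \<ge> 0" "\<forall>r. w r \<le> M"
  shows "wnorm w x \<le> sqrt M * norm x"
proof -
  have "(\<Sum>r\<in>UNIV. w r * (x $ r)\<^sup>2) \<le> (\<Sum>r\<in>UNIV. M * (x $ r)\<^sup>2)"
    by (rule sum_mono) (simp add: assms mult_right_mono)
  also have "\<dots> = M * (norm x)^2" by (simp add: norm_sq_vec sum_distrib_left)
  finally have "wnorm w x \<le> sqrt (M * (norm x)^2)" by (simp add: wnorm_def)
  also have "\<dots> = sqrt M * norm x" by (simp add: real_sqrt_mult)
  finally show ?thesis .
qed

lemma wnorm_ge:
  assumes "\<forall>r. w r \<ge> m" "m \<ge> 0"
  shows "sqrt m * norm x \<le> wnorm w x"
proof -
  have "m * (norm x)^2 = (\<Sum>r\<in>UNIV. m * (x $ r)\<^sup>2)" by (simp add: norm_sq_vec sum_distrib_left)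
  also have "\<dots> \<le> (\<Sum>r\<in>UNIV. w r * (x $ r)\<^sup>2)"
    by (rule sum_mono) (simp add: assms mult_right_mono)
  finally have "sqrt (m * (norm x)^2) \<le> wnorm w x" by (simp add: wnorm_def)
  moreover have "sqrt (m * (norm x)^2) = sqrt m * norm x" by (simp add: real_sqrt_mult)
  ultimately show ?thesis by simp
qed

text \<open>The W-projection onto a nonempty closed convex set exists and is characterised
  by minimality; it is the Euclidean closest point after scaling by \<open>W\<^sup>1\<^sup>/\<^sup>2\<close>.\<close>
lemma wproj_char:
  assumes w: "\<forall>r. w r > 0" and S: "closed S" "convex S" "S \<noteq> {}"
  shows "wproj w S x \<in> S \<and> (\<forall>y\<in>S. wnorm w (x - wproj w S x) \<le> wnorm w (x - y))"
    and "y \<in> S \<Longrightarrow> (\<forall>y'\<in>S. wnorm w (x - y) \<le> wnorm w (x - y')) \<Longrightarrow> wproj w S x = y"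
proof -
  have w0: "\<forall>r. w r \<ge> 0" using w less_imp_le by blast
  let ?S = "wscale w ` S"
  have cl: "closed ?S"
    by (rule closed_injective_linear_image[OF S(1) wscale_linear wscale_inj[OF w]])
  have cv: "convex ?S" by (rule convex_linear_image[OF wscale_linear S(2)])
  have ne: "?S \<noteq> {}" using S(3) by simp
  have wd: "\<And>y. wnorm w (x - y) = dist (wscale w x) (wscale w y)"
    by (simp add: wnorm_wscale[OF w0] dist_norm linear_diff[OF wscale_linear])
  obtain p where p: "p \<in> S" "wscale w p = closest_point ?S (wscale w x)"
    using closest_point_in_set[OF cl ne, of "wscale w x"] by auto
  have pmin: "\<forall>y'\<in>S. wnorm w (x - p) \<le> wnorm w (x - y')"
    using closest_point_le[OF cl] p by (auto simp: wd)
  have eq: "y = p" if "y \<in> S" "\<forall>y'\<in>S. wnorm w (x - y) \<le> wnorm w (x - y')" for y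
  proof -
    have "wscale w y = closest_point ?S (wscale w x)"
      by (rule closest_point_unique[OF cv cl]) (use that in \<open>auto simp: wd\<close>)
    then show ?thesis using p(2) injD[OF wscale_inj[OF w]] by metis
  qed
  have "wproj w S x = p" unfolding wproj_def
    by (rule the_equality) (use p(1) pmin eq in blast)+
  then show "wproj w S x \<in> S \<and> (\<forall>y\<in>S. wnorm w (x - wproj w S x) \<le> wnorm w (x - y))"
    using p pmin by simp
  show "y \<in> S \<Longrightarrow> (\<forall>y'\<in>S. wnorm w (x - y) \<le> wnorm w (x - y')) \<Longrightarrow> wproj w S x = y"
    using eq \<open>wproj w S x = p\<close> by simp
qed

lemma dualset_closed: "closed (dualset eqr)"
proof -
  have "dualset eqr = (\<Inter>r\<in>{r. \<not> eqr r}. {l. 0 \<le> l$r})" by (auto simp: dualset_def)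
  moreover have "closed {l::real^'a. 0 \<le> l$r}" for r
    by (rule closed_Collect_le) (auto intro: continuous_intros)
  ultimately show ?thesis by auto
qed

lemma dualset_convex: "convex (dualset eqr)"
  unfolding dualset_def convex_def by (auto intro!: add_nonneg_nonneg mult_nonneg_nonneg)

lemma zero_in_dualset: "0 \<in> dualset eqr"
  by (simp add: dualset_def)

text \<open>Since \<open>W\<close> is diagonal, the W-projection onto \<open>D = \<real>\<^sup>p \<times> \<real>\<^sup>q\<^sub>+\<close> clips the
  inequality components at zero, independently of \<open>W\<close>.\<close>
definition clip :: "('r::finite \<Rightarrow> bool) \<Rightarrow> real^'r \<Rightarrow> real^'r" where
  "clip eqr y = (\<chi> r. if eqr r then y$r else max 0 (y$r))"

lemma clip_in_dualset: "clip eqr y \<in> dualset eqr"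
  by (simp add: clip_def dualset_def)

lemma wproj_dualset:
  assumes w: "\<forall>r. w r > 0"
  shows "wproj w (dualset eqr) y = clip eqr y"
proof (rule wproj_char(2)[OF w dualset_closed dualset_convex])
  show "dualset eqr \<noteq> {}" using clip_in_dualset by blast
  show "clip eqr y \<in> dualset eqr" by (rule clip_in_dualset)
  show "\<forall>y'\<in>dualset eqr. wnorm w (y - clip eqr y) \<le> wnorm w (y - y')"
  proof
    fix y' assume y': "y' \<in> dualset eqr"
    have "((y - clip eqr y) $ r)\<^sup>2 \<le> ((y - y') $ r)\<^sup>2" for r
    proof (cases "eqr r")
      case True then show ?thesis by (simp add: clip_def)
    next
      case False
      then have "0 \<le> y'$r" using y' by (simp add: dualset_def)
      then show ?thesis using False
        by (cases "y$r \<ge> 0") (auto simp: clip_def abs_le_square_iff[symmetric])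
    qed
    then have "(\<Sum>r\<in>UNIV. w r * ((y - clip eqr y) $ r)\<^sup>2) \<le> (\<Sum>r\<in>UNIV. w r * ((y - y') $ r)\<^sup>2)"
      using w by (intro sum_mono mult_left_mono) (auto simp: less_imp_le)
    then show "wnorm w (y - clip eqr y) \<le> wnorm w (y - y')" by (simp add: wnorm_def)
  qed
qed

subsection \<open>Block structure\<close>

lemma blockproj_comb:
  "blockproj blk i ((1-t) *\<^sub>R a + t *\<^sub>R b) = (1-t) *\<^sub>R blockproj blk i a + t *\<^sub>R blockproj blk i b"
  by (simp add: blockproj_def vec_eq_iff)

lemma blockproj_diff: "blockproj blk i a - blockproj blk i b = blockproj blk i (a - b)"
  by (simp add: blockproj_def vec_eq_iff)

lemma blockproj_sum_sq:
  "(\<Sum>i\<in>(UNIV::'m::finite set). (norm (blockproj (blk::'n::finite\<Rightarrow>'m) i x))\<^sup>2) = (norm x)\<^sup>2"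
proof -
  have "(\<Sum>i\<in>(UNIV::'m set). (norm (blockproj blk i x))\<^sup>2)
      = (\<Sum>i\<in>UNIV. \<Sum>c\<in>UNIV. (if blk c = i then (x$c)\<^sup>2 else 0))"
    by (simp add: norm_sq_vec blockproj_def if_distrib[of "\<lambda>v. v\<^sup>2"] cong: if_cong)
  also have "\<dots> = (\<Sum>c\<in>UNIV. \<Sum>i\<in>UNIV. (if blk c = i then (x$c)\<^sup>2 else 0))"
    by (rule sum.swap)
  also have "\<dots> = (\<Sum>c\<in>UNIV. (x$c)\<^sup>2)" by simp
  finally show ?thesis by (simp add: norm_sq_vec)
qed

lemma block_strongly_convex_ineq:
  assumes sc: "block_strongly_convex blk i s f" and t: "0 \<le> t" "t \<le> 1"
  shows "f ((1-t) *\<^sub>R a + t *\<^sub>R b) \<le> (1-t) * f a + t * f b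
           - s/2 * t * (1-t) * (norm (blockproj blk i (a - b)))\<^sup>2"
proof -
  let ?P = "blockproj blk i"
  define Na where "Na = (norm (?P a))\<^sup>2"
  define Nb where "Nb = (norm (?P b))\<^sup>2"
  define Nd where "Nd = (norm (?P (a - b)))\<^sup>2"
  have N: "(norm (?P ((1-t) *\<^sub>R a + t *\<^sub>R b)))\<^sup>2 = (1-t)*Na + t*Nb - t*(1-t)*Nd"
    by (simp add: Na_def Nb_def Nd_def blockproj_comb norm_sq_convex_comb blockproj_diff)
  have "f ((1-t) *\<^sub>R a + t *\<^sub>R b) - s/2 * ((1-t)*Na + t*Nb - t*(1-t)*Nd)
      \<le> (1-t) * (f a - s/2 * Na) + t * (f b - s/2 * Nb)"
    using convex_onD[OF sc[unfolded block_strongly_convex_def] t UNIV_I UNIV_I, of a b]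
    unfolding N Na_def Nb_def by simp
  also have "\<dots> = (1-t) * f a + t * f b - s/2 * t * (1-t) * Nd - s/2 * ((1-t)*Na + t*Nb - t*(1-t)*Nd)"
    by (simp add: field_simps)
  finally show ?thesis by (simp add: Nd_def)
qed

section \<open>The dual function\<close>

text \<open>The data of Assumption 1 (only \<open>\<sigma>\<^sub>i\<close>-strong convexity, Lipschitz gradients, full
  row rank of \<open>A\<close> and Slater's condition are used).\<close>
locale dual_problem =
  fixes F :: "'m::finite \<Rightarrow> real^'n::finite \<Rightarrow> real" and blk :: "'n \<Rightarrow> 'm"
    and \<sigma> Lf :: "'m \<Rightarrow> real"
    and G :: "real^'n^'r::finite" and g :: "real^'r" and eqr :: "'r \<Rightarrow> bool"
  assumes sigma_pos: "\<And>i. \<sigma> i > 0"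
    and strong_cvx: "\<And>i. block_strongly_convex blk i (\<sigma> i) (F i)"
    and lip_grad: "\<And>i. lipschitz_gradient (Lf i) (F i)"
    and A_full_row_rank: "\<And>v::real^'r. (\<forall>r. \<not> eqr r \<longrightarrow> v $ r = 0) \<Longrightarrow> v v* G = 0 \<Longrightarrow> v = 0"
    and slater: "\<exists>z. \<forall>r. (eqr r \<longrightarrow> (G *v z) $ r = g $ r) \<and> (\<not> eqr r \<longrightarrow> (G *v z) $ r < g $ r)"
begin

abbreviation "zz l \<equiv> zopt F G g l"
abbreviation "dd l \<equiv> dualf F G g l"
abbreviation "gd l \<equiv> graddual F G g l"
abbreviation "DD \<equiv> dualset eqr"
abbreviation "Lstar \<equiv> dualopt F G g eqr"

subsection \<open>The primal objective\<close>

definition "sigma_min = Min (range \<sigma>)"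

lemma sigma_min_pos: "sigma_min > 0" using sigma_pos by (simp add: sigma_min_def)

text \<open>\<open>f = \<Sum>\<^sub>i f\<^sub>i\<close> is \<open>min\<^sub>i \<sigma>\<^sub>i\<close>-strongly convex: sum the block inequalities and use
  that the block distances add up to the full distance.\<close>
lemma fobj_strongly_convex: "strongly_convex_fun (fobj F) sigma_min"
  unfolding strongly_convex_fun_def
proof (intro allI impI)
  fix a b :: "real^'n" and t :: real assume t: "0 \<le> t" "t \<le> 1"
  define Q where "Q i = t * (1-t) * (norm (blockproj blk i (a - b)))\<^sup>2" for i
  have Q0: "Q i \<ge> 0" for i using t by (simp add: Q_def)
  have "fobj F ((1-t) *\<^sub>R a + t *\<^sub>R b) \<le> (\<Sum>i\<in>UNIV. (1-t) * F i a + t * F i b - \<sigma> i/2 * Q i)"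
    unfolding fobj_def Q_def
    by (rule sum_mono) (use block_strongly_convex_ineq[OF strong_cvx t] in \<open>simp add: mult.assoc\<close>)
  also have "\<dots> = (1-t) * fobj F a + t * fobj F b - (\<Sum>i\<in>UNIV. \<sigma> i/2 * Q i)"
    by (simp add: fobj_def sum.distrib sum_subtractf sum_distrib_left)
  also have "(\<Sum>i\<in>UNIV. \<sigma> i/2 * Q i) \<ge> (\<Sum>i\<in>UNIV. sigma_min/2 * Q i)"
    using Q0 by (intro sum_mono mult_right_mono) (simp_all add: sigma_min_def)
  moreover have "(\<Sum>i\<in>UNIV. sigma_min/2 * Q i)
      = sigma_min/2 * (t * (1-t)) * (\<Sum>i\<in>UNIV. (norm (blockproj blk i (a - b)))\<^sup>2)"
    by (simp add: Q_def sum_distrib_left mult.assoc)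
  then have "(\<Sum>i\<in>UNIV. sigma_min/2 * Q i) = sigma_min/2 * t * (1-t) * (norm (a - b))\<^sup>2"
    by (simp add: blockproj_sum_sq mult.assoc)
  ultimately show "fobj F ((1-t) *\<^sub>R a + t *\<^sub>R b)
      \<le> (1-t) * fobj F a + t * fobj F b - sigma_min/2 * t * (1-t) * (norm (a - b))\<^sup>2"
    by linarith
qed

lemma lagr_eq: "lagr F G g z l = fobj F z + (l v* G) \<bullet> z - l \<bullet> g"
  by (simp add: lagr_def inner_diff_right dot_lmul_matrix)

lemma lagr_strongly_convex: "strongly_convex_fun (\<lambda>z. lagr F G g z l) sigma_min"
  using fobj_strongly_convex unfolding strongly_convex_fun_def lagr_eq
  by (simp add: inner_add_right algebra_simps)

definition "gradF i = (SOME gr. (\<forall>x. (F i has_derivative (\<lambda>h. gr x \<bullet> h)) (at x)) \<and>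
                               (\<forall>x y. norm (gr x - gr y) \<le> Lf i * norm (x - y)))"

lemma gradF:
  "(F i has_derivative (\<lambda>h. gradF i x \<bullet> h)) (at x)"
  "norm (gradF i x - gradF i y) \<le> Lf i * norm (x - y)"
proof -
  have "\<exists>gr. (\<forall>x. (F i has_derivative (\<lambda>h. gr x \<bullet> h)) (at x)) \<and>
             (\<forall>x y. norm (gr x - gr y) \<le> Lf i * norm (x - y))"
    using lip_grad[of i] by (simp add: lipschitz_gradient_def)
  from someI_ex[OF this] show "(F i has_derivative (\<lambda>h. gradF i x \<bullet> h)) (at x)"
    "norm (gradF i x - gradF i y) \<le> Lf i * norm (x - y)"
    unfolding gradF_def by blast+
qed

definition "gradf x = (\<Sum>i\<in>UNIV. gradF i x)"
definition "Lsum = (\<Sum>i\<in>UNIV. Lf i)"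

lemma gradf_deriv: "(fobj F has_derivative (\<lambda>h. gradf x \<bullet> h)) (at x)"
proof -
  have "((\<lambda>x. \<Sum>i\<in>UNIV. F i x) has_derivative (\<lambda>h. \<Sum>i\<in>UNIV. gradF i x \<bullet> h)) (at x)"
    by (rule has_derivative_sum) (rule gradF)
  moreover have "fobj F = (\<lambda>x. \<Sum>i\<in>UNIV. F i x)" by (rule ext) (simp add: fobj_def)
  ultimately show ?thesis by (simp add: gradf_def inner_sum_left)
qed

lemma gradf_lipschitz: "norm (gradf x - gradf y) \<le> Lsum * norm (x - y)"
proof -
  have "norm (gradf x - gradf y) = norm (\<Sum>i\<in>UNIV. gradF i x - gradF i y)"
    by (simp add: gradf_def sum_subtractf)
  also have "\<dots> \<le> (\<Sum>i\<in>UNIV. norm (gradF i x - gradF i y))" by (rule norm_sum)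
  also have "\<dots> \<le> (\<Sum>i\<in>UNIV. Lf i * norm (x - y))" by (rule sum_mono) (rule gradF)
  finally show ?thesis by (simp add: Lsum_def sum_distrib_right)
qed

lemma lagr_deriv: "((\<lambda>z. lagr F G g z l) has_derivative (\<lambda>h. (gradf z + l v* G) \<bullet> h)) (at z)"
proof -
  have "((\<lambda>z. fobj F z + (l v* G) \<bullet> z - l \<bullet> g) has_derivative
          (\<lambda>h. gradf z \<bullet> h + (l v* G) \<bullet> h - 0)) (at z)"
    by (intro has_derivative_diff has_derivative_add gradf_deriv has_derivative_inner_right
        has_derivative_ident has_derivative_const)
  then show ?thesis by (simp add: lagr_eq inner_add_left)
qed

lemma fobj_cont: "continuous_on UNIV (fobj F)"
  by (rule continuous_at_imp_continuous_on) (use has_derivative_continuous[OF gradf_deriv] in blast)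

subsection \<open>The Lagrangian minimiser\<close>

lemma zopt_unique: "\<forall>y. lagr F G g z l \<le> lagr F G g y l \<Longrightarrow> zz l = z"
  unfolding zopt_def
  by (rule the_equality) (auto intro: strongly_convex_min_unique[OF lagr_strongly_convex sigma_min_pos])

lemma zopt_min: "lagr F G g (zz l) l \<le> lagr F G g y l"
proof -
  have "continuous_on UNIV (\<lambda>z. lagr F G g z l)"
    by (rule continuous_at_imp_continuous_on) (use has_derivative_continuous[OF lagr_deriv] in blast)
  then obtain z where z: "\<forall>y. lagr F G g z l \<le> lagr F G g y l"
    using strongly_convex_min_exists[OF lagr_strongly_convex sigma_min_pos] by blast
  then show ?thesis using zopt_unique[OF z] by simp
qed

lemma dualf_eq: "dd l = lagr F G g (zz l) l"
  unfolding dualf_def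
proof (rule antisym)
  show "(INF z. lagr F G g z l) \<le> lagr F G g (zz l) l"
    by (rule cINF_lower) (auto intro!: bdd_belowI[of _ "lagr F G g (zz l) l"] zopt_min)
  show "lagr F G g (zz l) l \<le> (INF z. lagr F G g z l)"
    by (rule cINF_greatest) (auto intro: zopt_min)
qed

lemma vG_eq_neg_gradf: "l v* G = - gradf (zz l)"
proof -
  have "(\<lambda>h. (gradf (zz l) + l v* G) \<bullet> h) = (\<lambda>v. 0)"
    by (rule differential_zero_maxmin[of "zz l" UNIV, OF _ _ lagr_deriv]) (auto intro: zopt_min)
  then have "(gradf (zz l) + l v* G) \<bullet> (gradf (zz l) + l v* G) = 0" by meson
  then show ?thesis by (simp add: add_eq_0_iff)
qed

lemma zopt_cong: assumes "l v* G = l' v* G" shows "zz l = zz l'"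
proof (rule zopt_unique, rule allI)
  fix y
  have "lagr F G g (zz l') l' \<le> lagr F G g y l'" by (rule zopt_min)
  then show "lagr F G g (zz l') l \<le> lagr F G g y l"
    using assms by (simp add: lagr_eq)
qed

subsection \<open>Quadratic models of the dual function\<close>

definition "normG = onorm ((*v) G)"
definition "normGt = onorm ((*v) (transpose G))"

lemma normG_nonneg: "normG \<ge> 0"
  by (simp add: normG_def onorm_pos_le[OF matrix_vector_mul_bounded_linear])

lemma normGt_nonneg: "normGt \<ge> 0"
  by (simp add: normGt_def onorm_pos_le[OF matrix_vector_mul_bounded_linear])

lemma G_bound: "norm (G *v x) \<le> normG * norm x"
  by (simp add: normG_def matrix_onorm_bound)

lemma Gt_bound: "norm (x v* G) \<le> normGt * norm x"
  using matrix_onorm_bound[of "transpose G" x] by (simp add: normGt_def)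

lemma gd_eq: "gd l = G *v zz l - g"
  by (simp add: graddual_def)

lemma gd_diff: "gd l - gd l' = G *v (zz l - zz l')"
  by (simp add: gd_eq matrix_vector_mult_diff_distrib)

text \<open>The basic inequality: \<open>d(a) + \<langle>\<nabla>d(b), b - a\<rangle> + \<sigma>/2\<parallel>z(b) - z(a)\<parallel>\<^sup>2 \<le> d(b)\<close>, from
  quadratic growth of \<open>L(\<cdot>, a)\<close> at \<open>z(a)\<close> evaluated at \<open>z(b)\<close>.\<close>
lemma dual_basic_ineq: "dd a + gd b \<bullet> (b - a) + sigma_min/2 * (norm (zz b - zz a))\<^sup>2 \<le> dd b"
proof -
  have "lagr F G g (zz a) a + sigma_min/2 * (norm (zz b - zz a))\<^sup>2 \<le> lagr F G g (zz b) a"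
    by (rule strongly_convex_min_growth[OF lagr_strongly_convex]) (use zopt_min in blast)
  also have "\<dots> = lagr F G g (zz b) b - (b - a) \<bullet> (G *v zz b - g)"
    by (simp add: lagr_def inner_diff_left)
  also have "\<dots> = dd b - gd b \<bullet> (b - a)"
    by (simp add: dualf_eq gd_eq inner_commute)
  finally show ?thesis by (simp add: dualf_eq)
qed

lemma dual_grad_monotone: "sigma_min * (norm (zz b - zz a))\<^sup>2 \<le> (gd a - gd b) \<bullet> (b - a)"
  using dual_basic_ineq[of a b] dual_basic_ineq[of b a]
  by (simp add: norm_minus_commute inner_diff_left inner_diff_right)

lemma dual_upper: "dd b \<le> dd a + gd a \<bullet> (b - a)"
proof -
  have "dd b + gd a \<bullet> (a - b) + sigma_min/2 * (norm (zz a - zz b))\<^sup>2 \<le> dd a"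
    by (rule dual_basic_ineq)
  moreover have "sigma_min/2 * (norm (zz a - zz b))\<^sup>2 \<ge> 0" using sigma_min_pos by simp
  moreover have "gd a \<bullet> (a - b) = - (gd a \<bullet> (b - a))" by (simp add: inner_diff_right)
  ultimately show ?thesis by linarith
qed

definition "Kd = normG\<^sup>2 / (2 * sigma_min)"

lemma Kd_nonneg: "Kd \<ge> 0" using sigma_min_pos by (simp add: Kd_def)

text \<open>Smoothness of \<open>d\<close>: \<open>\<nabla>d\<close> is Lipschitz with constant \<open>\<parallel>G\<parallel>\<^sup>2/\<sigma>\<close>, in the form of a
  quadratic lower model.\<close>
lemma dual_lower: "dd a + gd a \<bullet> (b - a) - Kd * (norm (b - a))\<^sup>2 \<le> dd b"
proof -
  define x where "x = norm (zz b - zz a)"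
  define y where "y = norm (b - a)"
  have basic: "dd a + gd b \<bullet> (b - a) + sigma_min/2 * x\<^sup>2 \<le> dd b"
    using dual_basic_ineq by (simp add: x_def)
  have "gd b \<bullet> (b - a) = gd a \<bullet> (b - a) + (G *v (zz b - zz a)) \<bullet> (b - a)"
  proof -
    have "gd b = gd a + G *v (zz b - zz a)" using gd_diff[of b a] by (simp add: algebra_simps)
    then show ?thesis by (simp add: inner_add_left)
  qed
  moreover have "\<bar>(G *v (zz b - zz a)) \<bullet> (b - a)\<bar> \<le> normG * x * y"
  proof -
    have "\<bar>(G *v (zz b - zz a)) \<bullet> (b - a)\<bar> \<le> norm (G *v (zz b - zz a)) * y"
      using Cauchy_Schwarz_ineq2 by (simp add: y_def)
    also have "\<dots> \<le> normG * x * y"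
      by (rule mult_right_mono) (use G_bound[of "zz b - zz a"] in \<open>simp_all add: x_def y_def\<close>)
    finally show ?thesis .
  qed
  ultimately have lin: "gd b \<bullet> (b - a) \<ge> gd a \<bullet> (b - a) - normG * x * y" by linarith
  have "(sigma_min * x - normG * y)\<^sup>2 / (2 * sigma_min) = sigma_min/2 * x\<^sup>2 - normG * x * y + Kd * y\<^sup>2"
    using sigma_min_pos by (simp add: Kd_def power2_eq_square field_simps)
  moreover have "(sigma_min * x - normG * y)\<^sup>2 / (2 * sigma_min) \<ge> 0" using sigma_min_pos by simp
  ultimately have "sigma_min/2 * x\<^sup>2 - normG * x * y + Kd * y\<^sup>2 \<ge> 0" by simp
  then show ?thesis using basic lin by (simp add: y_def)
qed

lemma dual_cont: "continuous_on UNIV dd"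
  unfolding continuous_on_iff
proof (intro ballI allI impI)
  fix x :: "real^'r" and e :: real assume e: "e > 0"
  define N where "N = norm (gd x) + Kd + 1"
  have N: "N > 0" using Kd_nonneg by (simp add: N_def add_nonneg_pos)
  define \<delta> where "\<delta> = min 1 (e / N)"
  have \<delta>: "\<delta> > 0" using e N by (simp add: \<delta>_def)
  have "dist (dd x') (dd x) < e" if "dist x' x < \<delta>" for x'
  proof -
    define y where "y = norm (x' - x)"
    have y: "y < \<delta>" "y \<le> 1" "y \<ge> 0" using that by (auto simp: y_def \<delta>_def dist_norm)
    have "Kd * y\<^sup>2 \<le> Kd * y" using y Kd_nonneg by (simp add: power2_eq_square mult_left_le mult_left_mono)
    moreover have "\<bar>gd x \<bullet> (x' - x)\<bar> \<le> norm (gd x) * y" by (simp add: y_def Cauchy_Schwarz_ineq2)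
    ultimately have "\<bar>dd x' - dd x\<bar> \<le> (norm (gd x) + Kd) * y"
      using dual_upper[where a=x and b=x'] dual_lower[of x x'] by (simp add: y_def algebra_simps abs_le_iff)
    also have "\<dots> \<le> N * y" using y by (simp add: N_def mult_right_mono)
    also have "\<dots> < N * \<delta>" using y N by simp
    also have "\<dots> \<le> e" using N e by (simp add: \<delta>_def min_def field_simps split: if_split)
    finally show ?thesis by (simp add: dist_real_def)
  qed
  then show "\<exists>\<delta>>0. \<forall>x'\<in>UNIV. dist x' x < \<delta> \<longrightarrow> dist (dd x') (dd x) < e" using \<delta> by blast
qed

subsection \<open>Dual optimality\<close>

definition "dual_VI l \<longleftrightarrow> (\<forall>l'\<in>DD. gd l \<bullet> (l' - l) \<le> 0)"

lemma Lstar_subset: "Lstar \<subseteq> DD"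
  by (auto simp: dualopt_def)

lemma Lstar_imp_VI: assumes l: "l \<in> Lstar" shows "dual_VI l"
  unfolding dual_VI_def
proof
  fix l' assume l': "l' \<in> DD"
  have lD: "l \<in> DD" and lmax: "\<And>m. m \<in> DD \<Longrightarrow> dd m \<le> dd l" using l by (auto simp: dualopt_def)
  define K where "K = Kd * (norm (l' - l))\<^sup>2"
  show "gd l \<bullet> (l' - l) \<le> 0"
  proof (rule le_of_le_plus_vanishing[where K = K])
    fix t :: real assume t: "0 < t" "t \<le> 1"
    have "(1 - t) *\<^sub>R l + t *\<^sub>R l' \<in> DD"
      using convexD_alt[OF dualset_convex lD l'] t by simp
    moreover have "(1 - t) *\<^sub>R l + t *\<^sub>R l' = l + t *\<^sub>R (l' - l)" by (simp add: algebra_simps)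
    ultimately have mem: "l + t *\<^sub>R (l' - l) \<in> DD" by simp
    have "dd l + gd l \<bullet> ((l + t *\<^sub>R (l' - l)) - l) - Kd * (norm ((l + t *\<^sub>R (l' - l)) - l))\<^sup>2
        \<le> dd (l + t *\<^sub>R (l' - l))" by (rule dual_lower)
    also have "\<dots> \<le> dd l" by (rule lmax[OF mem])
    finally have "dd l + gd l \<bullet> (t *\<^sub>R (l' - l)) - Kd * (norm (t *\<^sub>R (l' - l)))\<^sup>2 \<le> dd l"
      by simp
    moreover have "norm (t *\<^sub>R (l' - l)) = t * norm (l' - l)" using t by simp
    then have "Kd * (norm (t *\<^sub>R (l' - l)))\<^sup>2 = t * (t * K)"
      by (simp add: K_def power2_eq_square)
    ultimately have "t * (gd l \<bullet> (l' - l)) \<le> t * (t * K)" by simp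
    then show "gd l \<bullet> (l' - l) \<le> 0 + t * K" using t by simp
  qed
qed

lemma VI_imp_Lstar: assumes "l \<in> DD" "dual_VI l" shows "l \<in> Lstar"
proof -
  have "dd l' \<le> dd l" if "l' \<in> DD" for l'
    using dual_upper[where a=l and b=l'] assms that unfolding dual_VI_def by fastforce
  then show ?thesis using assms by (simp add: dualopt_def)
qed

subsection \<open>Existence and boundedness of dual solutions\<close>

lemma full_rank_bound:
  "\<exists>c>0. \<forall>v. (\<forall>r. \<not> eqr r \<longrightarrow> v $ r = 0) \<longrightarrow> c * norm v \<le> norm (v v* G)"
proof -
  let ?C = "{v::real^'r. \<forall>r. \<not> eqr r \<longrightarrow> v $ r = 0}"
  have "?C = (\<Inter>r\<in>{r. \<not> eqr r}. {v. v $ r = 0})" by auto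
  moreover have "closed {v::real^'r. v $ r = 0}" for r
    by (rule closed_Collect_eq) (auto intro: continuous_intros)
  ultimately have cl: "closed ?C" by auto
  have "continuous_on UNIV (\<lambda>v. norm (transpose G *v v))"
    by (intro continuous_on_norm matrix_vector_mult_linear_continuous_on)
  then have cont: "continuous_on UNIV (\<lambda>v. norm (v v* G))" by simp
  have hom: "norm ((t *\<^sub>R v) v* G) = t * norm (v v* G)" if "t > 0" for t v
    using vector_matrix_mult_lin[of t v 0 0 G] that by simp
  have pos: "norm (v v* G) > 0" if "v \<in> ?C" "v \<noteq> 0" for v
    using A_full_row_rank[of v] that by auto
  obtain c where "c > 0" "\<forall>x\<in>?C. c * norm x \<le> norm (x v* G)"
    using positively_homogeneous_lower_bound[OF cl _ cont hom pos] by auto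
  then show ?thesis by auto
qed

definition "slater_pt = (SOME z. \<forall>r. (eqr r \<longrightarrow> (G *v z) $ r = g $ r) \<and> (\<not> eqr r \<longrightarrow> (G *v z) $ r < g $ r))"
definition "slack r = g $ r - (G *v slater_pt) $ r"

lemma slack: "eqr r \<Longrightarrow> slack r = 0" "\<not> eqr r \<Longrightarrow> slack r > 0"
  using someI_ex[OF slater] by (auto simp: slack_def slater_pt_def)

lemma slack_term_nonneg: "\<mu> \<in> DD \<Longrightarrow> \<mu> $ r * slack r \<ge> 0"
  using slack[of r] by (cases "eqr r") (auto simp: dualset_def)

definition "slack_min = Min (insert 1 (slack ` {r. \<not> eqr r}))"

lemma slack_min_pos: "slack_min > 0" using slack by (simp add: slack_min_def)

lemma slack_min_le: "\<not> eqr r \<Longrightarrow> slack_min \<le> slack r" by (simp add: slack_min_def)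

text \<open>The inequality part of a multiplier is bounded by its complementary slackness
  at the Slater point, since all slacks there are positive.\<close>
lemma ineq_part_bound:
  assumes \<mu>: "\<mu> \<in> DD" and S: "(\<Sum>r\<in>UNIV. \<mu> $ r * slack r) \<le> B"
  shows "norm (\<chi> r. if eqr r then 0 else \<mu> $ r) \<le> real CARD('r) / slack_min * B"
proof -
  have B: "B \<ge> 0"
    using S sum_nonneg[of UNIV "\<lambda>r. \<mu> $ r * slack r"] slack_term_nonneg[OF \<mu>] by force
  have comp: "\<bar>(if eqr r then 0 else \<mu> $ r)\<bar> \<le> B / slack_min" for r
  proof (cases "eqr r")
    case True then show ?thesis using B slack_min_pos by simp
  next
    case False
    have "\<mu> $ r * slack_min \<le> \<mu> $ r * slack r"
      using \<mu> False slack_min_le[OF False] by (simp add: dualset_def mult_left_mono)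
    also have "\<dots> \<le> (\<Sum>r\<in>UNIV. \<mu> $ r * slack r)"
      by (rule member_le_sum) (use slack_term_nonneg[OF \<mu>] in auto)
    finally show ?thesis
      using S False \<mu> slack_min_pos by (simp add: dualset_def pos_le_divide_eq)
  qed
  have "norm (\<chi> r. if eqr r then 0 else \<mu> $ r) \<le> (\<Sum>r\<in>UNIV. \<bar>(if eqr r then 0 else \<mu> $ r)\<bar>)"
    using norm_le_l1_cart[of "\<chi> r. if eqr r then 0 else \<mu> $ r"] by simp
  also have "\<dots> \<le> (\<Sum>r\<in>(UNIV::'r set). B / slack_min)" by (rule sum_mono) (rule comp)
  finally show ?thesis by simp
qed

text \<open>A multiplier is controlled by its complementary slackness at the Slater point
  (which bounds the inequality part) and by \<open>\<parallel>G\<^sup>T\<mu>\<parallel>\<close> (which then bounds the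
  equality part by full row rank).\<close>
lemma multiplier_norm_bound:
  "\<exists>C. \<forall>\<mu>\<in>DD. \<forall>B. (\<Sum>r\<in>UNIV. \<mu> $ r * slack r) \<le> B \<longrightarrow> norm (\<mu> v* G) \<le> B \<longrightarrow> norm \<mu> \<le> C * B"
proof -
  obtain cfr where cfr: "cfr > 0"
    "\<And>v. (\<forall>r. \<not> eqr r \<longrightarrow> v $ r = 0) \<Longrightarrow> cfr * norm v \<le> norm (v v* G)"
    using full_rank_bound by blast
  define nI where "nI = real CARD('r) / slack_min"
  have "norm \<mu> \<le> ((1 + normGt * nI) / cfr + nI) * B"
    if \<mu>: "\<mu> \<in> DD" and S: "(\<Sum>r\<in>UNIV. \<mu> $ r * slack r) \<le> B" and q: "norm (\<mu> v* G) \<le> B"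
    for \<mu> B
  proof -
    define muI where "muI = (\<chi> r. if eqr r then 0 else \<mu> $ r)"
    define muE where "muE = \<mu> - muI"
    have nIb: "norm muI \<le> nI * B" using ineq_part_bound[OF \<mu> S] by (simp add: muI_def nI_def)
    have "muE v* G = \<mu> v* G - muI v* G" by (simp add: muE_def vector_matrix_mult_diff_distrib)
    then have "norm (muE v* G) \<le> norm (\<mu> v* G) + norm (muI v* G)"
      by (simp add: norm_triangle_ineq4)
    moreover have "norm (muI v* G) \<le> normGt * (nI * B)"
      using Gt_bound[of muI] mult_left_mono[OF nIb normGt_nonneg] by linarith
    ultimately have "norm (muE v* G) \<le> (1 + normGt * nI) * B"
      using q by (simp add: algebra_simps)
    moreover have "\<forall>r. \<not> eqr r \<longrightarrow> muE $ r = 0" by (simp add: muE_def muI_def)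
    ultimately have "cfr * norm muE \<le> (1 + normGt * nI) * B"
      using cfr(2) order_trans by blast
    then have "norm muE \<le> (1 + normGt * nI) / cfr * B"
      using cfr(1) by (simp add: field_simps)
    moreover have "norm \<mu> \<le> norm muE + norm muI"
      using norm_triangle_ineq[of muE muI] by (simp add: muE_def)
    ultimately show ?thesis using nIb by (simp add: algebra_simps)
  qed
  then show ?thesis by blast
qed

text \<open>On a superlevel set \<open>{d \<ge> c}\<close>, testing the Lagrangian at points of the unit
  ball around the Slater point bounds both quantities of the previous lemma.\<close>
lemma dual_superlevel_estimates:
  "\<exists>B. \<forall>\<mu>\<in>DD. dd \<mu> \<ge> c \<longrightarrow> (\<Sum>r\<in>UNIV. \<mu> $ r * slack r) \<le> B \<and> norm (\<mu> v* G) \<le> B"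
proof -
  let ?z = slater_pt
  have "cball ?z 1 \<noteq> {}" by simp
  then obtain zm where "zm \<in> cball ?z 1" "\<forall>y\<in>cball ?z 1. fobj F y \<le> fobj F zm"
    using continuous_attains_sup[OF compact_cball _ continuous_on_subset[OF fobj_cont]] by blast
  then have Mb: "\<And>u. norm u \<le> 1 \<Longrightarrow> fobj F (?z + u) \<le> fobj F zm" by (simp add: dist_norm)
  define B where "B = \<bar>fobj F zm - c\<bar>"
  have "(\<Sum>r\<in>UNIV. \<mu> $ r * slack r) \<le> B \<and> norm (\<mu> v* G) \<le> B" if \<mu>: "\<mu> \<in> DD" "dd \<mu> \<ge> c" for \<mu>
  proof -
    define S where "S = (\<Sum>r\<in>UNIV. \<mu> $ r * slack r)"
    have S0: "S \<ge> 0" unfolding S_def by (rule sum_nonneg) (use slack_term_nonneg[OF \<mu>(1)] in auto)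
    have key: "c \<le> fobj F (?z + u) - S + (\<mu> v* G) \<bullet> u" for u
    proof -
      have "c \<le> dd \<mu>" by (rule \<mu>(2))
      also have "\<dots> \<le> lagr F G g (?z + u) \<mu>" by (simp add: dualf_eq zopt_min)
      also have "\<dots> = fobj F (?z + u) + \<mu> \<bullet> (G *v ?z - g) + (\<mu> v* G) \<bullet> u"
        by (simp add: lagr_def matrix_vector_right_distrib inner_add_right inner_diff_right
            dot_lmul_matrix)
      also have "\<mu> \<bullet> (G *v ?z - g) = - S"
        by (simp add: S_def slack_def inner_vec_real sum_negf[symmetric] algebra_simps)
      finally show ?thesis by simp
    qed
    have "S \<le> B" using key[of 0] Mb[of 0] by (simp add: B_def)
    moreover have "norm (\<mu> v* G) \<le> B"
    proof (cases "\<mu> v* G = 0")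
      case True then show ?thesis by (simp add: B_def)
    next
      case False
      define u where "u = - (1 / norm (\<mu> v* G)) *\<^sub>R (\<mu> v* G)"
      have nu: "norm u \<le> 1" using False by (simp add: u_def)
      have "(\<mu> v* G) \<bullet> u = - norm (\<mu> v* G)"
        using False by (simp add: u_def inner_scaleR_right dot_square_norm power2_eq_square)
      then show ?thesis using key[of u] Mb[OF nu] S0 by (simp add: B_def)
    qed
    ultimately show ?thesis by (simp add: S_def)
  qed
  then show ?thesis by blast
qed

lemma dual_superlevel_bounded: "\<exists>R. \<forall>\<mu>\<in>DD. dd \<mu> \<ge> c \<longrightarrow> norm \<mu> \<le> R"
proof -
  obtain C where C: "\<And>\<mu> B. \<mu> \<in> DD \<Longrightarrow> (\<Sum>r\<in>UNIV. \<mu> $ r * slack r) \<le> B \<Longrightarrow>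
      norm (\<mu> v* G) \<le> B \<Longrightarrow> norm \<mu> \<le> C * B"
    using multiplier_norm_bound by blast
  obtain B where B: "\<forall>\<mu>\<in>DD. dd \<mu> \<ge> c \<longrightarrow> (\<Sum>r\<in>UNIV. \<mu> $ r * slack r) \<le> B \<and> norm (\<mu> v* G) \<le> B"
    using dual_superlevel_estimates by blast
  have "norm \<mu> \<le> C * B" if "\<mu> \<in> DD" "dd \<mu> \<ge> c" for \<mu>
    using B that by (intro C) auto
  then show ?thesis by blast
qed

lemma Lstar_nonempty: "\<exists>\<mu>. \<mu> \<in> Lstar"
proof -
  obtain R where R: "\<forall>\<mu>\<in>DD. dd \<mu> \<ge> dd 0 \<longrightarrow> norm \<mu> \<le> R" using dual_superlevel_bounded by blast
  let ?S = "DD \<inter> cball 0 R"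
  have R0: "0 \<in> ?S" using R zero_in_dualset by auto
  have "compact ?S" by (rule closed_Int_compact[OF dualset_closed compact_cball])
  then obtain m where m: "m \<in> ?S" "\<forall>y\<in>?S. dd y \<le> dd m"
    using continuous_attains_sup[OF _ _ continuous_on_subset[OF dual_cont]] R0 by blast
  have "dd y \<le> dd m" if y: "y \<in> DD" for y
  proof (cases "dd y \<ge> dd 0")
    case True then show ?thesis using m R y by auto
  next
    case False
    have "dd 0 \<le> dd m" using m(2) R0 by blast
    then show ?thesis using False by linarith
  qed
  then show ?thesis using m by (auto simp: dualopt_def)
qed

lemma Lstar_bounded: "\<exists>R. \<forall>\<mu>\<in>Lstar. norm \<mu> \<le> R"
proof -
  obtain m where m: "m \<in> Lstar" using Lstar_nonempty by blast
  obtain R where "\<forall>\<mu>\<in>DD. dd \<mu> \<ge> dd m \<longrightarrow> norm \<mu> \<le> R" using dual_superlevel_bounded by blast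
  then show ?thesis using m by (auto simp: dualopt_def)
qed

text \<open>All dual solutions share the same primal point \<open>z*\<close>: two of them have equal
  dual values, so the quadratic term in the basic inequality must vanish.\<close>
lemma zopt_Lstar: assumes "a \<in> Lstar" "b \<in> Lstar" shows "zz a = zz b"
proof -
  have dab: "dd a = dd b" using assms by (auto simp: dualopt_def intro: antisym)
  have "gd a \<bullet> (b - a) \<le> 0" using Lstar_imp_VI[OF assms(1)] assms(2) Lstar_subset
    unfolding dual_VI_def by blast
  moreover have "dd b + gd a \<bullet> (a - b) + sigma_min/2 * (norm (zz a - zz b))\<^sup>2 \<le> dd a"
    by (rule dual_basic_ineq)
  moreover have "gd a \<bullet> (a - b) = - (gd a \<bullet> (b - a))" by (simp add: inner_diff_right)
  ultimately have "sigma_min/2 * (norm (zz a - zz b))\<^sup>2 \<le> 0" using dab by linarith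
  then show ?thesis using sigma_min_pos by (simp add: mult_le_0_iff)
qed

section \<open>The dual solution set is a polyhedron\<close>

text \<open>All solutions share \<open>z*\<close>, hence \<open>q* = G\<^sup>T\<mu>\<close> and
  \<open>\<nabla>d(\<mu>) = g*\<close>; \<open>I\<^sub>0\<close> is the set of inequality rows with \<open>g*\<^sub>r < 0\<close>, on which every
  solution vanishes by complementary slackness.\<close>
definition "mu0 = (SOME m. m \<in> Lstar)"
definition "qstar = mu0 v* G"
definition "gstar = gd mu0"
definition "I0 = {r. \<not> eqr r \<and> gstar $ r < 0}"
definition "Pstar = {\<mu>. \<mu> \<in> DD \<and> \<mu> v* G = qstar \<and> (\<forall>r\<in>I0. \<mu> $ r = 0)}"

lemma mu0: "mu0 \<in> Lstar"
  unfolding mu0_def using Lstar_nonempty by (rule someI_ex)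

lemma gd_Lstar: "\<mu> \<in> Lstar \<Longrightarrow> gd \<mu> = gstar"
  using zopt_Lstar[OF _ mu0] by (simp add: gstar_def gd_eq)

text \<open>Sign conditions from the variational inequality at \<open>\<mu>\<^sub>0\<close>: \<open>g*\<close> vanishes on
  equality rows and is nonpositive on inequality rows.\<close>
lemma gstar_signs: "eqr r \<Longrightarrow> gstar $ r = 0" "\<not> eqr r \<Longrightarrow> gstar $ r \<le> 0"
proof -
  have vi: "gstar \<bullet> (l' - mu0) \<le> 0" if "l' \<in> DD" for l'
    using Lstar_imp_VI[OF mu0] that by (simp add: dual_VI_def gstar_def)
  have m0: "mu0 \<in> DD" using mu0 Lstar_subset by blast
  define e where "e c = ((\<chi> i. if i = r then c else 0) :: real^'r)" for c
  have ine: "gstar \<bullet> e c = gstar $ r * c" for c by (simp add: e_def inner_unit_vec)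
  have "mu0 + e 1 \<in> DD" using m0 by (auto simp: dualset_def e_def)
  then have le: "gstar $ r \<le> 0" using vi ine[of 1] by fastforce
  then show "\<not> eqr r \<Longrightarrow> gstar $ r \<le> 0" .
  assume "eqr r"
  then have "mu0 + e (-1) \<in> DD" using m0 by (auto simp: dualset_def e_def)
  then have "gstar $ r \<ge> 0" using vi ine[of "-1"] by fastforce
  with le show "gstar $ r = 0" by simp
qed

lemma Lstar_subset_Pstar: "Lstar \<subseteq> Pstar"
proof
  fix \<mu> assume mu: "\<mu> \<in> Lstar"
  have mD: "\<mu> \<in> DD" using mu Lstar_subset by blast
  have q: "\<mu> v* G = qstar"
    using vG_eq_neg_gradf[of \<mu>] vG_eq_neg_gradf[of mu0] zopt_Lstar[OF mu mu0]
    by (simp add: qstar_def)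
  have "\<mu> $ r = 0" if r: "r \<in> I0" for r
  proof -
    have rr: "\<not> eqr r" "gstar $ r < 0" using r by (auto simp: I0_def)
    define l' where "l' = \<mu> + (\<chi> i. if i = r then - (\<mu> $ r) else 0)"
    have "l' \<in> DD" using mD by (auto simp: dualset_def l'_def)
    then have "gd \<mu> \<bullet> (l' - \<mu>) \<le> 0" using Lstar_imp_VI[OF mu] by (simp add: dual_VI_def)
    then have "(- gstar $ r) * \<mu> $ r \<le> 0" by (simp add: gd_Lstar[OF mu] l'_def inner_unit_vec)
    then have "\<mu> $ r \<le> 0" using rr by (simp add: zero_le_mult_iff)
    moreover have "\<mu> $ r \<ge> 0" using mD rr by (simp add: dualset_def)
    ultimately show ?thesis by simp
  qed
  then show "\<mu> \<in> Pstar" using mD q by (simp add: Pstar_def)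
qed

text \<open>Conversely a point of \<open>Pstar\<close> has gradient \<open>g*\<close> and is complementary to it,
  so it solves the variational inequality.\<close>
lemma Pstar_subset_Lstar: "Pstar \<subseteq> Lstar"
proof
  fix \<mu> assume mu: "\<mu> \<in> Pstar"
  have mD: "\<mu> \<in> DD" and q: "\<mu> v* G = qstar" and z: "\<And>r. r \<in> I0 \<Longrightarrow> \<mu> $ r = 0"
    using mu by (auto simp: Pstar_def)
  have "zz \<mu> = zz mu0" by (rule zopt_cong) (simp add: q qstar_def)
  then have g: "gd \<mu> = gstar" by (simp add: gstar_def gd_eq)
  have prod0: "gstar $ r * \<mu> $ r = 0" for r
    using gstar_signs[of r] z[of r] by (cases "eqr r"; cases "gstar $ r < 0") (auto simp: I0_def)
  have compl: "gstar \<bullet> \<mu> = 0"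
    unfolding inner_vec_real by (rule sum.neutral) (use prod0 in blast)
  have "gstar \<bullet> l' \<le> 0" if l': "l' \<in> DD" for l'
  proof -
    have "gstar $ r * l' $ r \<le> 0" for r
      using gstar_signs[of r] l' by (cases "eqr r") (auto simp: dualset_def mult_nonpos_nonneg)
    then show ?thesis by (simp add: inner_vec_real sum_nonpos)
  qed
  then have "dual_VI \<mu>" using compl by (simp add: dual_VI_def g inner_diff_right)
  then show "\<mu> \<in> Lstar" using VI_imp_Lstar[OF mD] by blast
qed

lemma Lstar_eq_Pstar: "Lstar = Pstar"
  using Lstar_subset_Pstar Pstar_subset_Lstar by blast

lemma Pstar_closed: "closed Pstar"
proof -
  have e: "Pstar = DD \<inter> {\<mu>. transpose G *v \<mu> = qstar} \<inter> (\<Inter>r\<in>I0. {\<mu>. \<mu> $ r = 0})"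
    by (auto simp: Pstar_def)
  have c1: "closed {\<mu>. transpose G *v \<mu> = qstar}"
    by (rule closed_Collect_eq[OF matrix_vector_mult_linear_continuous_on continuous_on_const])
  have c2: "closed {\<mu>::real^'r. \<mu> $ r = 0}" for r
    by (rule closed_Collect_eq) (auto intro: continuous_intros)
  show ?thesis unfolding e by (intro closed_Int closed_INT ballI dualset_closed c1 c2)
qed

lemma Pstar_convex: "convex Pstar"
  unfolding convex_def
proof (intro ballI allI impI)
  fix x y and u v :: real assume x: "x \<in> Pstar" and y: "y \<in> Pstar" and uv: "0 \<le> u" "0 \<le> v" "u + v = 1"
  have "u *\<^sub>R x + v *\<^sub>R y \<in> DD" using x y uv dualset_convex unfolding convex_def Pstar_def by blast
  moreover have "(u *\<^sub>R x + v *\<^sub>R y) v* G = qstar"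
    using x y uv by (simp add: vector_matrix_mult_lin Pstar_def scaleR_left_distrib[symmetric])
  moreover have "\<forall>r\<in>I0. (u *\<^sub>R x + v *\<^sub>R y) $ r = 0" using x y by (simp add: Pstar_def)
  ultimately show "u *\<^sub>R x + v *\<^sub>R y \<in> Pstar" by (simp add: Pstar_def)
qed

subsection \<open>A Hoffman-type bound\<close>

text \<open>For an active set \<open>J\<close>, \<open>TJ J\<close> is the tangent cone of \<open>Pstar\<close> at points whose
  active inequality rows are \<open>J\<close>, \<open>CJ J\<close> the part of its polar lying in the
  nonnegative orthant of \<open>J\<close>, and \<open>phi\<close> the residual of the defining equations.\<close>
definition "TJ J = {v. v v* G = 0 \<and> (\<forall>r\<in>I0. v $ r = 0) \<and> (\<forall>r\<in>J. v $ r \<ge> 0)}"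
definition "CJ J = {u. (\<forall>r\<in>J. u $ r \<ge> 0) \<and> (\<forall>v\<in>TJ J. u \<bullet> v \<le> 0)}"
definition "phi u = norm (u v* G) + (\<Sum>r\<in>I0. \<bar>u $ r\<bar>)"

text \<open>\<open>phi\<close> vanishes on \<open>CJ J\<close> only at the origin (a vector in both \<open>CJ J\<close> and
  \<open>TJ J\<close> is orthogonal to itself), so it dominates the norm there.\<close>
lemma cone_bound: "\<exists>c>0. \<forall>u\<in>CJ J. c * norm u \<le> phi u"
proof (rule positively_homogeneous_lower_bound)
  have e: "CJ J = (\<Inter>r\<in>J. {u. 0 \<le> u $ r}) \<inter> (\<Inter>v\<in>TJ J. {u. u \<bullet> v \<le> 0})"
    by (auto simp: CJ_def)
  have c1: "closed {u::real^'r. 0 \<le> u $ r}" for r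
    by (rule closed_Collect_le) (auto intro: continuous_intros)
  have c2: "closed {u::real^'r. u \<bullet> v \<le> 0}" for v
    using closed_halfspace_le[of v 0] by (simp add: inner_commute)
  show "closed (CJ J)" unfolding e by (intro closed_Int closed_INT ballI c1 c2)
  show "\<And>x t. x \<in> CJ J \<Longrightarrow> 0 < t \<Longrightarrow> t *\<^sub>R x \<in> CJ J"
    by (auto simp: CJ_def mult_nonneg_nonpos)
  have "continuous_on UNIV (\<lambda>u. norm (transpose G *v u) + (\<Sum>r\<in>I0. \<bar>u $ r\<bar>))"
    by (intro continuous_intros)
  then show "continuous_on UNIV phi" by (simp add: phi_def[abs_def])
  show "\<And>x t. 0 < t \<Longrightarrow> phi (t *\<^sub>R x) = t * phi x"
    using vector_matrix_mult_lin[of _ _ 0 0 G]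
    by (simp add: phi_def abs_mult sum_distrib_left algebra_simps)
  show "0 < phi u" if u: "u \<in> CJ J" "u \<noteq> 0" for u
  proof (rule ccontr)
    assume "\<not> 0 < phi u"
    moreover have "(\<Sum>r\<in>I0. \<bar>u $ r\<bar>) \<ge> 0" by (simp add: sum_nonneg)
    ultimately have "norm (u v* G) = 0" "(\<Sum>r\<in>I0. \<bar>u $ r\<bar>) = 0"
      unfolding phi_def using norm_ge_zero[of "u v* G"] by linarith+
    then have "u \<in> TJ J" using u by (simp add: TJ_def CJ_def sum_nonneg_eq_0_iff)
    then have "u \<bullet> u \<le> 0" using u by (simp add: CJ_def)
    then show False using u by (simp add: inner_gt_zero_iff[symmetric] del: inner_gt_zero_iff)
  qed
qed

text \<open>Directions of \<open>TJ J\<close>, for \<open>J\<close> the active set of \<open>p \<in> Pstar\<close>, are feasible: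
  inactive inequality rows stay positive for small steps.\<close>
lemma Pstar_feasible_direction:
  assumes p: "p \<in> Pstar" and v: "v \<in> TJ {r. \<not> eqr r \<and> p $ r = 0}"
  shows "\<exists>t>0. p + t *\<^sub>R v \<in> Pstar"
proof -
  have pD: "p \<in> DD" and pq: "p v* G = qstar" and pz: "\<And>r. r \<in> I0 \<Longrightarrow> p $ r = 0"
    using p by (auto simp: Pstar_def)
  have vG: "v v* G = 0" and vz: "\<And>r. r \<in> I0 \<Longrightarrow> v $ r = 0"
    and vJ: "\<And>r. \<not> eqr r \<Longrightarrow> p $ r = 0 \<Longrightarrow> v $ r \<ge> 0"
    using v by (auto simp: TJ_def)
  define \<delta> where "\<delta> = Min (insert 1 ((\<lambda>r. p $ r) ` {r. \<not> eqr r \<and> p $ r \<noteq> 0}))"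
  have ppos: "p $ r > 0" if "\<not> eqr r" "p $ r \<noteq> 0" for r
    using pD that by (force simp: dualset_def)
  have \<delta>: "\<delta> > 0" using ppos by (auto simp: \<delta>_def)
  have \<delta>le: "\<delta> \<le> p $ r" if "\<not> eqr r" "p $ r \<noteq> 0" for r
    using that by (simp add: \<delta>_def)
  define t where "t = \<delta> / (norm v + 1)"
  have t: "t > 0" using \<delta> by (simp add: t_def add_nonneg_pos)
  have tv: "t * norm v < \<delta>"
  proof -
    have "t * norm v = \<delta> * (norm v / (norm v + 1))" by (simp add: t_def)
    also have "\<dots> < \<delta> * 1" using \<delta>
      by (intro mult_strict_left_mono) (auto simp: divide_less_eq add_nonneg_pos[of "norm v" 1])
    finally show ?thesis by simp
  qed
  have "0 \<le> (p + t *\<^sub>R v) $ r" if r: "\<not> eqr r" for r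
  proof (cases "p $ r = 0")
    case True
    then show ?thesis using vJ[OF r] t by simp
  next
    case False
    have "\<bar>t * v $ r\<bar> \<le> t * norm v" using t component_le_norm_cart[of v r]
      by (simp add: abs_mult mult_left_mono)
    then have "\<bar>t * v $ r\<bar> < p $ r" using tv \<delta>le[OF r False] by linarith
    then show ?thesis by simp
  qed
  moreover have "(p + t *\<^sub>R v) v* G = qstar" using vector_matrix_mult_lin[of 1 p t v G] pq vG by simp
  ultimately have "p + t *\<^sub>R v \<in> Pstar" using pz vz by (simp add: Pstar_def dualset_def)
  then show ?thesis using t by blast
qed

text \<open>Hence the residual \<open>x - p\<close> of the Euclidean projection \<open>p\<close> of \<open>x \<in> D\<close> onto
  \<open>Pstar\<close> lies in \<open>CJ J\<close> for the active set \<open>J\<close> of \<open>p\<close>.\<close>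
lemma projection_residual_in_cone:
  assumes x: "x \<in> DD"
  defines "p \<equiv> closest_point Pstar x"
  shows "x - p \<in> CJ {r. \<not> eqr r \<and> p $ r = 0}"
  unfolding CJ_def
proof (intro CollectI conjI ballI)
  have pP: "p \<in> Pstar"
    unfolding p_def using closest_point_in_set[OF Pstar_closed] mu0 Lstar_eq_Pstar by blast
  fix v assume v: "v \<in> TJ {r. \<not> eqr r \<and> p $ r = 0}"
  obtain t where t: "t > 0" "p + t *\<^sub>R v \<in> Pstar"
    using Pstar_feasible_direction[OF pP v] by blast
  have "(x - p) \<bullet> ((p + t *\<^sub>R v) - p) \<le> 0"
    unfolding p_def by (rule closest_point_dot[OF Pstar_convex Pstar_closed t(2)[unfolded p_def]])
  then have "t * ((x - p) \<bullet> v) \<le> 0" by (simp add: inner_scaleR_right)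
  then show "(x - p) \<bullet> v \<le> 0" using t by (simp add: mult_le_0_iff)
qed (use x in \<open>simp add: dualset_def\<close>)

text \<open>There are finitely many active sets, so one
  constant serves for all.\<close>
lemma hoffman:
  "\<exists>\<theta>>0. \<forall>x\<in>DD. \<exists>p\<in>Pstar. norm (x - p) \<le> \<theta> * (norm (x v* G - qstar) + (\<Sum>r\<in>I0. \<bar>x $ r\<bar>))"
proof -
  obtain cf where cf: "\<And>J. cf J > 0" "\<And>J u. u \<in> CJ J \<Longrightarrow> cf J * norm u \<le> phi u"
    using cone_bound by metis
  define cmin where "cmin = Min (range cf)"
  have cmin: "cmin > 0" using cf(1) by (simp add: cmin_def)
  have "\<exists>p\<in>Pstar. norm (x - p) \<le> (1/cmin) * (norm (x v* G - qstar) + (\<Sum>r\<in>I0. \<bar>x $ r\<bar>))"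
    if x: "x \<in> DD" for x
  proof -
    define p where "p = closest_point Pstar x"
    have pP: "p \<in> Pstar"
      unfolding p_def using closest_point_in_set[OF Pstar_closed] mu0 Lstar_eq_Pstar by blast
    define J where "J = {r. \<not> eqr r \<and> p $ r = 0}"
    have "cmin * norm (x - p) \<le> cf J * norm (x - p)"
      by (rule mult_right_mono) (simp_all add: cmin_def)
    also have "\<dots> \<le> phi (x - p)"
      using cf(2) projection_residual_in_cone[OF x] by (simp add: J_def p_def)
    also have "phi (x - p) = norm (x v* G - qstar) + (\<Sum>r\<in>I0. \<bar>x $ r\<bar>)"
      using pP by (simp add: phi_def Pstar_def vector_matrix_mult_diff_distrib)
    finally show ?thesis using pP cmin by (auto simp: field_simps)
  qed
  then show ?thesis using cmin by (intro exI[of _ "1/cmin"]) auto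
qed

end

section \<open>The error bound\<close>

lemma quadratic_ineq_bound:
  fixes s a B x \<rho> :: real
  assumes s: "s > 0" and a: "a \<ge> 0" and B: "B \<ge> 0" and r: "\<rho> \<ge> 0"
    and h: "s * x\<^sup>2 \<le> a * \<rho> * x + B * \<rho>\<^sup>2"
  shows "x \<le> \<rho> * (2*a/s + 1 + 2*B/s)"
proof -
  have c1: "\<rho> * 1 \<le> \<rho> * (2*a/s + 1 + 2*B/s)" using s a B r by (intro mult_left_mono) auto
  have c2: "\<rho> * (2*a/s) \<le> \<rho> * (2*a/s + 1 + 2*B/s)" using s a B r by (intro mult_left_mono) auto
  have c3: "\<rho> * (2*B/s) \<le> \<rho> * (2*a/s + 1 + 2*B/s)" using s a B r by (intro mult_left_mono) auto
  show ?thesis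
  proof (cases "x \<le> \<rho>")
    case True then show ?thesis using c1 by simp
  next
    case False
    then have xr: "x > \<rho>" by simp
    then have xp: "x > 0" using r by simp
    show ?thesis
    proof (cases "a * \<rho> * x \<ge> s * x\<^sup>2 / 2")
      case True
      then have "s * x * x \<le> 2 * a * \<rho> * x" by (simp add: power2_eq_square)
      then have "s * x \<le> 2 * a * \<rho>" using xp by (simp add: mult_le_cancel_right)
      then have "x \<le> \<rho> * (2*a/s)" using s by (simp add: field_simps)
      then show ?thesis using c2 by simp
    next
      case False
      then have "s * x\<^sup>2 / 2 < B * \<rho>\<^sup>2" using h by simp
      also have "B * \<rho>\<^sup>2 \<le> B * \<rho> * x" using B r xr by (simp add: power2_eq_square mult_left_mono mult.assoc)
      finally have "s * x * x < 2 * B * \<rho> * x" by (simp add: power2_eq_square)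
      then have "s * x < 2 * B * \<rho>" using xp by (simp add: mult_less_cancel_right)
      then have "x \<le> \<rho> * (2*B/s)" using s by (simp add: field_simps)
      then show ?thesis using c3 by simp
    qed
  qed
qed

text \<open>\<open>aT + b \<le> (a + b)(1 + T\<^sup>2)\<close>: how affine bounds in \<open>T\<close> are absorbed into the
  form \<open>c\<^sub>1 + c\<^sub>2T\<^sup>2\<close> of the theorem.\<close>
lemma linear_le_one_plus_square: fixes T a b :: real assumes "T \<ge> 0" "a \<ge> 0" "b \<ge> 0"
  shows "a * T + b \<le> (a + b) * (1 + T\<^sup>2)"
proof -
  have "0 \<le> (T - 1)\<^sup>2" by simp
  then have "2 * T \<le> 1 + T\<^sup>2" by (simp add: power2_eq_square algebra_simps)
  then have T: "T \<le> 1 + T\<^sup>2" using assms(1) by linarith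
  have "a * T \<le> a * (1 + T\<^sup>2)" using assms T by (simp add: mult_left_mono)
  moreover have "b * 1 \<le> b * (1 + T\<^sup>2)" using assms by (intro mult_left_mono) auto
  ultimately show ?thesis by (simp add: algebra_simps)
qed

lemma threshold_bound: fixes T a b \<kappa> \<rho> :: real
  assumes T: "T \<ge> 0" and ab: "a \<ge> 0" "b \<ge> 0" and k: "\<kappa> > 0" and r: "\<rho> \<ge> 0"
    and h: "\<kappa> \<le> \<rho> * (a * T + b)"
  shows "T \<le> ((a + b) / \<kappa>) * (1 + T\<^sup>2) * \<rho>"
proof -
  have "T * \<kappa> \<le> T * (\<rho> * (a * T + b))" using T h by (simp add: mult_left_mono)
  also have "\<dots> = \<rho> * (a * T\<^sup>2 + b * T)" by (simp add: power2_eq_square algebra_simps)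
  also have "\<dots> \<le> \<rho> * ((a + b) * (1 + T\<^sup>2))"
  proof (rule mult_left_mono[OF _ r])
    have "a * T\<^sup>2 \<le> a * (1 + T\<^sup>2)" using ab by (intro mult_left_mono) auto
    moreover have "b * T \<le> b * (1 + T\<^sup>2)" using ab T linear_le_one_plus_square[of T 1 0] by (simp add: mult_left_mono)
    ultimately show "a * T\<^sup>2 + b * T \<le> (a + b) * (1 + T\<^sup>2)" by (simp add: algebra_simps)
  qed
  finally show ?thesis using k by (simp add: field_simps)
qed

subsection \<open>Weighted setting\<close>

text \<open>A positive diagonal weight \<open>W\<close>; in the theorem it is \<open>Wdiag\<close>.  Here \<open>lbar l\<close> is
  the W-projection of \<open>l\<close> onto \<open>\<Lambda>*\<close>, \<open>Tw\<close> the function \<open>\<T>\<close>, \<open>lplus l\<close> the projected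
  gradient step \<open>[l + W\<^sup>-\<^sup>1\<nabla>d(l)]\<^sub>D\<close> and \<open>res l = lplus l - l\<close> the proximal residual.\<close>
locale weighted_dual_problem = dual_problem F blk \<sigma> Lf G g eqr
  for F :: "'m::finite \<Rightarrow> real^'n::finite \<Rightarrow> real" and blk :: "'n \<Rightarrow> 'm" and \<sigma> Lf :: "'m \<Rightarrow> real"
    and G :: "real^'n^'r::finite" and g :: "real^'r" and eqr :: "'r \<Rightarrow> bool" +
  fixes w :: "'r \<Rightarrow> real"
  assumes wpos: "\<And>r. w r > 0"
begin

definition "wmin = Min (range w)"
definition "wmax = Max (range w)"

lemma wmin_pos: "wmin > 0" using wpos by (simp add: wmin_def)
lemma wmin_le: "wmin \<le> w r" by (simp add: wmin_def)
lemma wmax_ge: "w r \<le> wmax" by (simp add: wmax_def)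
lemma wmax_pos: "wmax > 0" using wpos[of undefined] wmax_ge[of undefined] by linarith
lemma w_pos_all: "\<forall>r. w r > 0" using wpos by blast
lemma w_nonneg_all: "\<forall>r. w r \<ge> 0" using wpos less_imp_le by blast

lemma wnorm_upper: "wnorm w x \<le> sqrt wmax * norm x"
  by (rule wnorm_le) (use w_nonneg_all wmax_ge in auto)

lemma norm_le_wnorm: "norm x \<le> wnorm w x / sqrt wmin"
proof -
  have "sqrt wmin * norm x \<le> wnorm w x" by (rule wnorm_ge) (use wmin_le wmin_pos in auto)
  then show ?thesis using wmin_pos by (simp add: pos_le_divide_eq mult.commute)
qed

abbreviation "lbar l \<equiv> wproj w Lstar l"
abbreviation "Tw l \<equiv> Tfun w Lstar l"
definition "lplus l = clip eqr (l + winv w (gd l))"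
definition "res l = lplus l - l"

lemma lbar_in_Lstar: "lbar l \<in> Lstar"
  and lbar_min: "\<mu> \<in> Lstar \<Longrightarrow> wnorm w (l - lbar l) \<le> wnorm w (l - \<mu>)"
  using wproj_char(1)[OF w_pos_all Pstar_closed Pstar_convex, of l] mu0 Lstar_eq_Pstar by auto

definition "Rstar = (SOME R. \<forall>\<mu>\<in>Lstar. norm \<mu> \<le> R)"

lemma Rstar: "\<mu> \<in> Lstar \<Longrightarrow> norm \<mu> \<le> Rstar"
  using someI_ex[OF Lstar_bounded] unfolding Rstar_def by blast

lemma Rstar_nonneg: "Rstar \<ge> 0" using Rstar[OF mu0] norm_ge_zero[of mu0] by linarith

text \<open>\<open>\<T>(l)\<close> is a genuine maximum distance since \<open>\<Lambda>*\<close> is bounded.\<close>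
lemma Tw_ge: assumes "\<mu> \<in> Lstar" shows "wnorm w (l - \<mu>) \<le> Tw l"
  unfolding Tfun_def
proof (rule cSUP_upper[OF assms])
  have "wnorm w (l - s) \<le> sqrt wmax * (norm l + Rstar)" if "s \<in> Lstar" for s
  proof -
    have "wnorm w (l - s) \<le> sqrt wmax * norm (l - s)" by (rule wnorm_upper)
    also have "\<dots> \<le> sqrt wmax * (norm l + Rstar)"
      using Rstar[OF that] norm_triangle_ineq4[of l s] wmax_pos by (intro mult_left_mono) auto
    finally show ?thesis .
  qed
  then show "bdd_above ((\<lambda>s. wnorm w (l - s)) ` Lstar)" by (rule bdd_aboveI2)
qed

lemma Tw_nonneg: "Tw l \<ge> 0"
  using Tw_ge[OF mu0, of l] wnorm_nonneg[OF w_nonneg_all, of "l - mu0"] by linarith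

definition "Tn l = Tw l / sqrt wmin"

lemma dist_Lstar: assumes "\<mu> \<in> Lstar" shows "norm (l - \<mu>) \<le> Tn l"
proof -
  have "wnorm w (l - \<mu>) / sqrt wmin \<le> Tw l / sqrt wmin"
    using Tw_ge[OF assms, of l] by (rule divide_right_mono) (use wmin_pos in simp)
  then show ?thesis using norm_le_wnorm[of "l - \<mu>"] unfolding Tn_def by linarith
qed

lemma norm_le_Tn: "norm l \<le> Tn l + Rstar"
  using dist_Lstar[OF mu0, of l] Rstar[OF mu0] norm_triangle_sub[of l mu0] by linarith

subsection \<open>The projected gradient step\<close>

lemma proxres_eq_res: "proxres w eqr (graddual F G g) l = res l"
  by (simp add: proxres_def wproj_dualset[OF w_pos_all] lplus_def res_def)

lemma lplus_DD: "lplus l \<in> DD" by (simp add: lplus_def clip_in_dualset)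

lemma lplus_comp:
  "lplus l $ i = (if eqr i then l $ i + gd l $ i / w i else max 0 (l $ i + gd l $ i / w i))"
  by (simp add: lplus_def clip_def winv_def)

text \<open>Optimality of the projection defining \<open>lplus l\<close>: \<open>\<nabla>d(l) - W r(l)\<close> lies in the
  normal cone of \<open>D\<close> at \<open>lplus l\<close>.\<close>
lemma lplus_VI:
  assumes mu: "\<mu> \<in> DD"
  shows "(gd l - (\<chi> i. w i * res l $ i)) \<bullet> (\<mu> - lplus l) \<le> 0"
proof -
  have "(gd l $ i - w i * (lplus l $ i - l $ i)) * (\<mu> $ i - lplus l $ i) \<le> 0" for i
  proof (cases "eqr i \<or> l $ i + gd l $ i / w i \<ge> 0")
    case True
    then have "lplus l $ i = l $ i + gd l $ i / w i" by (auto simp: lplus_comp)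
    then show ?thesis using wpos[of i] by simp
  next
    case False
    then have ne: "\<not> eqr i" and neg: "l $ i + gd l $ i / w i < 0" by auto
    then have lp0: "lplus l $ i = 0" by (simp add: lplus_comp)
    have "gd l $ i - w i * (lplus l $ i - l $ i) = w i * (l $ i + gd l $ i / w i)"
      using wpos[of i] lp0 by (simp add: field_simps)
    also have "\<dots> < 0" using wpos[of i] neg by (simp add: mult_pos_neg)
    finally show ?thesis using mu ne lp0 by (simp add: dualset_def mult_nonpos_nonneg)
  qed
  then show ?thesis by (simp add: inner_vec_real res_def sum_nonpos)
qed

lemma W_res_norm: "norm (\<chi> i. w i * res l $ i) \<le> wmax * norm (res l)"
proof (rule power2_le_imp_le)
  have "(w i * res l $ i)\<^sup>2 \<le> wmax\<^sup>2 * (res l $ i)\<^sup>2" for i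
  proof -
    have "(w i)\<^sup>2 \<le> wmax\<^sup>2" using wpos[of i] wmax_ge[of i] by (simp add: power_mono)
    then show ?thesis by (simp add: power_mult_distrib mult_right_mono)
  qed
  then have "(\<Sum>i\<in>UNIV. (w i * res l $ i)\<^sup>2) \<le> (\<Sum>i\<in>UNIV. wmax\<^sup>2 * (res l $ i)\<^sup>2)"
    by (rule sum_mono)
  then show "(norm (\<chi> i. w i * res l $ i))\<^sup>2 \<le> (wmax * norm (res l))\<^sup>2"
    by (simp add: norm_sq_vec power_mult_distrib sum_distrib_left)
  show "0 \<le> wmax * norm (res l)" using wmax_pos by simp
qed

subsection \<open>Distance of the primal point\<close>

definition "zstar = zz mu0"
definition "zdist l = norm (zz l - zstar)"

lemma zopt_Lstar_zstar: "\<mu> \<in> Lstar \<Longrightarrow> zz \<mu> = zstar"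
  unfolding zstar_def using zopt_Lstar[OF _ mu0] .

lemma zdist_nonneg: "zdist l \<ge> 0" by (simp add: zdist_def)

lemma gd_diff_zstar: "\<mu> \<in> Lstar \<Longrightarrow> gd l - gd \<mu> = G *v (zz l - zstar)"
  using gd_diff[of l \<mu>] zopt_Lstar_zstar by simp

lemma gd_diff_zstar_bound: "\<mu> \<in> Lstar \<Longrightarrow> norm (gd l - gd \<mu>) \<le> normG * zdist l"
  using gd_diff_zstar G_bound by (simp add: zdist_def)

lemma zdist_le_dist: assumes mu: "\<mu> \<in> Lstar" shows "sigma_min * zdist l \<le> normG * norm (l - \<mu>)"
proof -
  have "sigma_min * (zdist l)\<^sup>2 \<le> (gd l - gd \<mu>) \<bullet> (\<mu> - l)"
    using dual_grad_monotone[of \<mu> l] zopt_Lstar_zstar[OF mu] by (simp add: zdist_def norm_minus_commute)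
  also have "\<dots> \<le> norm (gd l - gd \<mu>) * norm (\<mu> - l)" by (rule norm_cauchy_schwarz)
  also have "\<dots> \<le> normG * zdist l * norm (\<mu> - l)"
    using gd_diff_zstar_bound[OF mu, of l] by (rule mult_right_mono) simp
  finally have h: "(sigma_min * zdist l) * zdist l \<le> (normG * norm (l - \<mu>)) * zdist l"
    by (simp add: power2_eq_square norm_minus_commute algebra_simps)
  show ?thesis
  proof (cases "zdist l = 0")
    case True then show ?thesis using normG_nonneg by simp
  next
    case False
    then have "zdist l > 0" using zdist_nonneg[of l] by simp
    then show ?thesis using h by (simp add: mult_le_cancel_right)
  qed
qed

text \<open>The same monotonicity tested against \<open>lplus l\<close> instead of \<open>l\<close>, using both
  variational inequalities: the key estimate of \<open>z(l) - z*\<close> by the residual.\<close>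
lemma zdist_sq_le:
  assumes mu: "\<mu> \<in> Lstar"
  shows "sigma_min * (zdist l)\<^sup>2
           \<le> wmax * norm (res l) * norm (\<mu> - lplus l) + normG * zdist l * norm (res l)"
proof -
  define Wr where "Wr = (\<chi> i. w i * res l $ i)"
  have A: "sigma_min * (zdist l)\<^sup>2 \<le> (gd l - gd \<mu>) \<bullet> (\<mu> - l)"
    using dual_grad_monotone[of \<mu> l] zopt_Lstar_zstar[OF mu] by (simp add: zdist_def norm_minus_commute)
  have "\<mu> - l = (\<mu> - lplus l) + res l" by (simp add: res_def)
  then have B: "(gd l - gd \<mu>) \<bullet> (\<mu> - l)
      = gd l \<bullet> (\<mu> - lplus l) - gd \<mu> \<bullet> (\<mu> - lplus l) + (gd l - gd \<mu>) \<bullet> res l"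
    by (simp add: inner_add_right inner_diff_left algebra_simps)
  have C: "gd l \<bullet> (\<mu> - lplus l) \<le> Wr \<bullet> (\<mu> - lplus l)"
    using lplus_VI[OF Lstar_subset[THEN subsetD, OF mu], of l] by (simp add: Wr_def inner_diff_left)
  have "Wr \<bullet> (\<mu> - lplus l) \<le> norm Wr * norm (\<mu> - lplus l)" by (rule norm_cauchy_schwarz)
  also have "\<dots> \<le> wmax * norm (res l) * norm (\<mu> - lplus l)"
    using W_res_norm[of l] by (simp add: Wr_def mult_right_mono)
  finally have D: "Wr \<bullet> (\<mu> - lplus l) \<le> wmax * norm (res l) * norm (\<mu> - lplus l)" .
  have E: "0 \<le> gd \<mu> \<bullet> (\<mu> - lplus l)"
    using Lstar_imp_VI[OF mu] lplus_DD[of l] by (simp add: dual_VI_def inner_diff_right)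
  have "(gd l - gd \<mu>) \<bullet> res l \<le> norm (gd l - gd \<mu>) * norm (res l)" by (rule norm_cauchy_schwarz)
  also have "\<dots> \<le> normG * zdist l * norm (res l)"
    using gd_diff_zstar_bound[OF mu] by (simp add: mult_right_mono)
  finally show ?thesis using A B C D E by linarith
qed

subsection \<open>Large residual\<close>

lemma error_bound_large_residual:
  assumes "norm (res l) \<ge> 1"
  shows "wnorm w (l - lbar l) \<le> 1 * (1 + (Tw l)\<^sup>2) * norm (res l)"
proof -
  have "wnorm w (l - lbar l) \<le> Tw l" by (rule Tw_ge[OF lbar_in_Lstar])
  also have "\<dots> \<le> 1 + (Tw l)\<^sup>2" using linear_le_one_plus_square[of "Tw l" 1 0] Tw_nonneg by simp
  also have "\<dots> \<le> (1 + (Tw l)\<^sup>2) * norm (res l)"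
    using assms mult_left_mono[of 1 "norm (res l)" "1 + (Tw l)\<^sup>2"] by simp
  finally show ?thesis by simp
qed

subsection \<open>Small residual, \<open>z(l)\<close> far from \<open>z*\<close>\<close>

lemma zdist_sq_small_residual:
  assumes r1: "norm (res l) < 1"
  shows "sigma_min * (zdist l)\<^sup>2
           \<le> norm (res l) * (wmax * (Tn l + 1) + normG\<^sup>2 * Tn l / sigma_min)"
proof -
  define \<mu> where "\<mu> = lbar l"
  have mu: "\<mu> \<in> Lstar" unfolding \<mu>_def by (rule lbar_in_Lstar)
  define x where "x = zdist l"
  define \<rho> where "\<rho> = norm (res l)"
  have r0: "\<rho> \<ge> 0" by (simp add: \<rho>_def)
  have eq: "\<mu> - lplus l = (\<mu> - l) - res l" by (simp add: res_def)
  have "norm (\<mu> - lplus l) \<le> norm (\<mu> - l) + norm (res l)" unfolding eq by (rule norm_triangle_ineq4)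
  also have "\<dots> = norm (l - \<mu>) + \<rho>" by (simp add: \<rho>_def norm_minus_commute)
  also have "\<dots> \<le> Tn l + 1" using dist_Lstar[OF mu, of l] r1 by (simp add: \<rho>_def)
  finally have "wmax * \<rho> * norm (\<mu> - lplus l) \<le> wmax * \<rho> * (Tn l + 1)"
    using wmax_pos r0 by (intro mult_left_mono) auto
  moreover have "normG * x \<le> normG\<^sup>2 * Tn l / sigma_min"
  proof -
    have "sigma_min * x \<le> normG * Tn l"
      using zdist_le_dist[OF mu, of l] mult_left_mono[OF dist_Lstar[OF mu, of l] normG_nonneg]
      by (simp add: x_def)
    then have "(normG / sigma_min) * (sigma_min * x) \<le> (normG / sigma_min) * (normG * Tn l)"
      using normG_nonneg sigma_min_pos by (intro mult_left_mono) auto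
    then show ?thesis using sigma_min_pos by (simp add: power2_eq_square field_simps)
  qed
  then have "normG * x * \<rho> \<le> (normG\<^sup>2 * Tn l / sigma_min) * \<rho>" using r0 by (rule mult_right_mono)
  ultimately show ?thesis
    using zdist_sq_le[OF mu, of l] by (simp add: x_def \<rho>_def algebra_simps)
qed

definition "smin_gap = Min (insert 1 ((\<lambda>r. - gstar $ r) ` I0))"
lemma smin_gap_pos: "smin_gap > 0" by (simp add: smin_gap_def I0_def)
lemma smin_gap_le: "r \<in> I0 \<Longrightarrow> smin_gap \<le> - gstar $ r" by (simp add: smin_gap_def)

definition "ka = normG\<^sup>2 * (wmax + normG\<^sup>2 / sigma_min) / sqrt wmin"
definition "kb = normG\<^sup>2 * wmax"
definition "kappa = sigma_min * smin_gap\<^sup>2 / 4"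

text \<open>If \<open>z(l)\<close> is far from \<open>z*\<close> (at least \<open>smin_gap/(2\<parallel>G\<parallel>)\<close>), the previous
  estimate forces the residual to be of order \<open>1/\<T>(l)\<close>.\<close>
lemma error_bound_far:
  assumes r1: "norm (res l) < 1" and far: "normG * zdist l > smin_gap/2"
  shows "wnorm w (l - lbar l) \<le> ((ka + kb) / kappa) * (1 + (Tw l)\<^sup>2) * norm (res l)"
proof -
  define x where "x = zdist l"
  define \<rho> where "\<rho> = norm (res l)"
  define M where "M = wmax * (Tn l + 1) + normG\<^sup>2 * Tn l / sigma_min"
  have "(smin_gap/2)\<^sup>2 < (normG * x)\<^sup>2" using far smin_gap_pos by (intro power_strict_mono) (auto simp: x_def)
  then have "kappa < normG\<^sup>2 * (sigma_min * x\<^sup>2)"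
    using sigma_min_pos by (simp add: kappa_def power_mult_distrib power_divide)
  also have "\<dots> \<le> normG\<^sup>2 * (\<rho> * M)"
    using zdist_sq_small_residual[OF r1] by (intro mult_left_mono) (simp_all add: x_def \<rho>_def M_def)
  also have "\<dots> = \<rho> * (ka * Tw l + kb)"
    using wmin_pos sigma_min_pos by (simp add: M_def ka_def kb_def Tn_def field_simps)
  finally have "kappa \<le> \<rho> * (ka * Tw l + kb)" by simp
  then have "Tw l \<le> ((ka + kb) / kappa) * (1 + (Tw l)\<^sup>2) * \<rho>"
    using wmax_pos sigma_min_pos wmin_pos smin_gap_pos
    by (intro threshold_bound[OF Tw_nonneg]) (simp_all add: ka_def kb_def kappa_def \<rho>_def)
  moreover have "wnorm w (l - lbar l) \<le> Tw l" by (rule Tw_ge[OF lbar_in_Lstar])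
  ultimately show ?thesis by (simp add: \<rho>_def)
qed

subsection \<open>Small residual, \<open>z(l)\<close> close to \<open>z*\<close>\<close>

text \<open>\<open>G\<^sup>Tl = -\<nabla>f(z(l))\<close>, so the equation \<open>G\<^sup>T\<mu> = q*\<close> of \<open>\<Lambda>*\<close> is violated at \<open>l\<close> only by
  \<open>O(\<parallel>z(l) - z*\<parallel>)\<close>.\<close>
lemma vG_residual_bound: "norm (l v* G - qstar) \<le> \<bar>Lsum\<bar> * zdist l"
proof -
  have "l v* G - qstar = gradf zstar - gradf (zz l)"
    using vG_eq_neg_gradf[of l] vG_eq_neg_gradf[of mu0] by (simp add: qstar_def zstar_def)
  then have "norm (l v* G - qstar) \<le> Lsum * zdist l"
    using gradf_lipschitz[of zstar "zz l"] by (simp add: zdist_def norm_minus_commute)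
  also have "\<dots> \<le> \<bar>Lsum\<bar> * zdist l" using zdist_nonneg by (simp add: mult_right_mono)
  finally show ?thesis .
qed

definition "theta = (SOME \<theta>. \<theta> > 0 \<and> (\<forall>x\<in>DD. \<exists>p\<in>Pstar.
   norm (x - p) \<le> \<theta> * (norm (x v* G - qstar) + (\<Sum>r\<in>I0. \<bar>x $ r\<bar>))))"

lemma theta: "theta > 0"
  "\<And>x. x \<in> DD \<Longrightarrow> \<exists>p\<in>Pstar. norm (x - p) \<le> theta * (norm (x v* G - qstar) + (\<Sum>r\<in>I0. \<bar>x $ r\<bar>))"
  using someI_ex[OF hoffman] unfolding theta_def by blast+

text \<open>On \<open>I\<^sub>0\<close> the gradient stays below \<open>-smin_gap/2\<close> while \<open>z(l)\<close> is close to \<open>z*\<close>;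
  then a component of \<open>lplus l\<close> in \<open>I\<^sub>0\<close> is either clipped to \<open>0\<close> or bounded by a
  multiple of the residual.\<close>
definition "cI = real (card I0) * (2 * wmax / smin_gap)"

lemma I0_lplus_bound:
  assumes near: "normG * zdist l \<le> smin_gap/2"
  shows "(\<Sum>r\<in>I0. \<bar>lplus l $ r\<bar>) \<le> cI * norm l * norm (res l)"
proof -
  have "\<bar>lplus l $ r\<bar> \<le> 2 * wmax / smin_gap * norm l * norm (res l)" if r: "r \<in> I0" for r
  proof -
    have ne: "\<not> eqr r" using r by (simp add: I0_def)
    have "gd l = gstar + G *v (zz l - zstar)"
      using gd_diff_zstar[OF mu0, of l] by (simp add: gstar_def algebra_simps)
    moreover have "\<bar>(G *v (zz l - zstar)) $ r\<bar> \<le> normG * zdist l"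
      using component_le_norm_cart[of "G *v (zz l - zstar)" r] G_bound[of "zz l - zstar"]
      by (simp add: zdist_def)
    ultimately have gdneg: "gd l $ r \<le> - smin_gap / 2" using smin_gap_le[OF r] near by simp
    define q where "q = gd l $ r / w r"
    have qneg: "q < 0" using gdneg smin_gap_pos wpos[of r] by (simp add: q_def divide_neg_pos)
    have "q * wmax \<le> q * w r" using qneg wmax_ge[of r] by (simp add: mult_le_cancel_left)
    then have "q * wmax \<le> - smin_gap / 2" using wpos[of r] gdneg by (simp add: q_def)
    then have qb: "1 \<le> (- q) * (2 * wmax / smin_gap)"
      using smin_gap_pos wmax_pos by (simp add: field_simps)
    show ?thesis
    proof (cases "l $ r + q \<le> 0")
      case True
      then show ?thesis using ne smin_gap_pos wmax_pos by (simp add: lplus_comp q_def)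
    next
      case False
      then have lpr: "lplus l $ r = l $ r + q" using ne by (simp add: lplus_comp q_def)
      have "\<bar>lplus l $ r\<bar> \<le> norm l" using lpr False qneg component_le_norm_cart[of l r] by simp
      also have "\<dots> \<le> norm l * ((- q) * (2 * wmax / smin_gap))"
        using mult_left_mono[OF qb norm_ge_zero[of l]] by simp
      also have "\<dots> \<le> norm l * (norm (res l) * (2 * wmax / smin_gap))"
      proof -
        have "- q \<le> norm (res l)"
          using component_le_norm_cart[of "res l" r] lpr qneg by (simp add: res_def)
        then show ?thesis using smin_gap_pos wmax_pos by (intro mult_left_mono mult_right_mono) auto
      qed
      finally show ?thesis by (simp add: algebra_simps)
    qed
  qed
  then have "(\<Sum>r\<in>I0. \<bar>lplus l $ r\<bar>) \<le> real (card I0) * (2 * wmax / smin_gap * norm l * norm (res l))"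
    by (rule sum_bounded_above)
  then show ?thesis by (simp add: cI_def algebra_simps)
qed

lemma near_hoffman:
  assumes near: "normG * zdist l \<le> smin_gap/2"
  shows "\<exists>p\<in>Lstar. norm (lplus l - p)
           \<le> theta * (\<bar>Lsum\<bar> * zdist l + (normGt + cI * norm l) * norm (res l))"
proof -
  obtain p where p: "p \<in> Pstar"
    "norm (lplus l - p) \<le> theta * (norm (lplus l v* G - qstar) + (\<Sum>r\<in>I0. \<bar>lplus l $ r\<bar>))"
    using theta(2)[OF lplus_DD] by blast
  have "lplus l v* G - qstar = (l v* G - qstar) + res l v* G"
    by (simp add: res_def vector_matrix_mult_diff_distrib)
  then have "norm (lplus l v* G - qstar) \<le> norm (l v* G - qstar) + norm (res l v* G)"
    by (metis norm_triangle_ineq)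
  then have "norm (lplus l v* G - qstar) + (\<Sum>r\<in>I0. \<bar>lplus l $ r\<bar>)
      \<le> \<bar>Lsum\<bar> * zdist l + (normGt + cI * norm l) * norm (res l)"
    using vG_residual_bound[of l] Gt_bound[of "res l"] I0_lplus_bound[OF near]
    by (simp add: algebra_simps)
  then have "norm (lplus l - p) \<le> theta * (\<bar>Lsum\<bar> * zdist l + (normGt + cI * norm l) * norm (res l))"
    using p(2) theta(1) by (meson mult_left_mono less_imp_le order_trans)
  then show ?thesis using p(1) Lstar_eq_Pstar by blast
qed

definition "aa = wmax * theta * \<bar>Lsum\<bar> + normG"
definition "cx = 2 * aa / sigma_min + 1 + 2 * (wmax * theta * normGt) / sigma_min"
definition "dx = 2 * (wmax * theta * cI) / sigma_min"
definition "AA = 1 + theta * (\<bar>Lsum\<bar> * cx + normGt)"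
definition "BB = theta * (\<bar>Lsum\<bar> * dx + cI)"

lemma near_constants_nonneg: "cI \<ge> 0" "aa \<ge> 0" "cx \<ge> 0" "dx \<ge> 0" "AA \<ge> 0" "BB \<ge> 0"
proof -
  show cI: "cI \<ge> 0" using wmax_pos smin_gap_pos by (simp add: cI_def)
  show aa: "aa \<ge> 0" using wmax_pos theta(1) normG_nonneg by (simp add: aa_def)
  show cx: "cx \<ge> 0" using aa sigma_min_pos wmax_pos theta(1) normGt_nonneg by (simp add: cx_def)
  show dx: "dx \<ge> 0" using cI sigma_min_pos wmax_pos theta(1) by (simp add: dx_def)
  show "AA \<ge> 0" using cx theta(1) normGt_nonneg by (simp add: AA_def)
  show "BB \<ge> 0" using dx theta(1) cI by (simp add: BB_def)
qed

text \<open>Inserting a bound of the form provided by \<open>near_hoffman\<close> into \<open>zdist_sq_le\<close> gives a quadratic inequality for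
  \<open>\<parallel>z(l) - z*\<parallel>\<close>, whence \<open>\<parallel>z(l) - z*\<parallel> = O((1 + \<parallel>l\<parallel>) \<parallel>r(l)\<parallel>)\<close>.\<close>
lemma zdist_near:
  assumes p: "p \<in> Lstar"
    and hp: "norm (lplus l - p) \<le> theta * (\<bar>Lsum\<bar> * zdist l + (normGt + cI * norm l) * norm (res l))"
  shows "zdist l \<le> norm (res l) * (cx + dx * norm l)"
proof -
  define x where "x = zdist l"
  define \<rho> where "\<rho> = norm (res l)"
  define B where "B = wmax * theta * (normGt + cI * norm l)"
  have r0: "\<rho> \<ge> 0" by (simp add: \<rho>_def)
  have B0: "B \<ge> 0"
    using wmax_pos theta(1) normGt_nonneg near_constants_nonneg(1) by (simp add: B_def)
  have "wmax * \<rho> * norm (lplus l - p)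
      \<le> wmax * \<rho> * (theta * (\<bar>Lsum\<bar> * x + (normGt + cI * norm l) * \<rho>))"
    using hp wmax_pos r0 by (intro mult_left_mono) (auto simp: x_def \<rho>_def)
  also have "\<dots> = (aa - normG) * \<rho> * x + B * \<rho>\<^sup>2"
    by (simp add: aa_def B_def power2_eq_square algebra_simps)
  finally have "sigma_min * x\<^sup>2 \<le> aa * \<rho> * x + B * \<rho>\<^sup>2"
    using zdist_sq_le[OF p, of l] by (simp add: x_def \<rho>_def norm_minus_commute algebra_simps)
  then have "x \<le> \<rho> * (2 * aa / sigma_min + 1 + 2 * B / sigma_min)"
    using near_constants_nonneg(2) by (intro quadratic_ineq_bound[OF sigma_min_pos _ B0 r0])
  also have "2 * aa / sigma_min + 1 + 2 * B / sigma_min = cx + dx * norm l"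
    using sigma_min_pos by (simp add: cx_def dx_def B_def field_simps)
  finally show ?thesis by (simp add: x_def \<rho>_def)
qed

definition "C3 = BB / sqrt wmin + (AA + BB * Rstar)"

lemma error_bound_near:
  assumes near: "normG * zdist l \<le> smin_gap/2"
  shows "wnorm w (l - lbar l) \<le> (sqrt wmax * C3) * (1 + (Tw l)\<^sup>2) * norm (res l)"
proof -
  define \<rho> where "\<rho> = norm (res l)"
  define nl where "nl = norm l"
  have r0: "\<rho> \<ge> 0" by (simp add: \<rho>_def)
  obtain p where p: "p \<in> Lstar"
    and hp: "norm (lplus l - p) \<le> theta * (\<bar>Lsum\<bar> * zdist l + (normGt + cI * norm l) * norm (res l))"
    using near_hoffman[OF near] by blast
  have "\<bar>Lsum\<bar> * zdist l \<le> \<bar>Lsum\<bar> * (\<rho> * (cx + dx * nl))"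
    using zdist_near[OF p hp] by (intro mult_left_mono) (simp_all add: \<rho>_def nl_def)
  then have "norm (lplus l - p) \<le> theta * (\<bar>Lsum\<bar> * (\<rho> * (cx + dx * nl)) + (normGt + cI * nl) * \<rho>)"
    using hp theta(1) by (smt (verit) mult_left_mono \<rho>_def nl_def)
  also have "\<dots> = \<rho> * (AA - 1 + BB * nl)" by (simp add: AA_def BB_def algebra_simps)
  finally have lpp: "norm (lplus l - p) \<le> \<rho> * (AA - 1 + BB * nl)" .
  have eq: "l - p = (lplus l - p) - res l" by (simp add: res_def)
  have "norm (l - p) \<le> norm (lplus l - p) + \<rho>"
    unfolding eq \<rho>_def by (rule norm_triangle_ineq4)
  also have "\<dots> \<le> \<rho> * (AA + BB * nl)" using lpp by (simp add: algebra_simps)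
  also have "\<dots> \<le> \<rho> * (BB / sqrt wmin * Tw l + (AA + BB * Rstar))"
  proof (rule mult_left_mono[OF _ r0])
    have "BB * nl \<le> BB * (Tn l + Rstar)"
      using norm_le_Tn[of l] near_constants_nonneg(6) by (simp add: nl_def mult_left_mono)
    then show "AA + BB * nl \<le> BB / sqrt wmin * Tw l + (AA + BB * Rstar)"
      by (simp add: Tn_def algebra_simps)
  qed
  also have "\<dots> \<le> \<rho> * (C3 * (1 + (Tw l)\<^sup>2))"
    using linear_le_one_plus_square[OF Tw_nonneg, of "BB / sqrt wmin" "AA + BB * Rstar"]
      near_constants_nonneg(5,6) Rstar_nonneg wmin_pos r0
    by (intro mult_left_mono) (auto simp: C3_def)
  finally have "norm (l - p) \<le> \<rho> * (C3 * (1 + (Tw l)\<^sup>2))" .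
  then have "sqrt wmax * norm (l - p) \<le> sqrt wmax * (\<rho> * (C3 * (1 + (Tw l)\<^sup>2)))"
    using wmax_pos by (intro mult_left_mono) auto
  then have "wnorm w (l - p) \<le> sqrt wmax * (\<rho> * (C3 * (1 + (Tw l)\<^sup>2)))"
    using wnorm_upper[of "l - p"] by linarith
  then show ?thesis using lbar_min[OF p, of l] by (simp add: \<rho>_def algebra_simps)
qed

lemma error_bound_euclidean:
  "\<exists>K>0. \<forall>l. wnorm w (l - lbar l) \<le> K * (1 + (Tw l)\<^sup>2) * norm (res l)"
proof -
  define K2 where "K2 = (ka + kb) / kappa"
  define K3 where "K3 = sqrt wmax * C3"
  have K2: "K2 \<ge> 0"
    using wmax_pos sigma_min_pos wmin_pos smin_gap_pos by (simp add: K2_def ka_def kb_def kappa_def)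
  have K3: "K3 \<ge> 0"
    using near_constants_nonneg(5,6) Rstar_nonneg wmin_pos wmax_pos by (simp add: K3_def C3_def)
  have "wnorm w (l - lbar l) \<le> (1 + K2 + K3) * ((1 + (Tw l)\<^sup>2) * norm (res l))" for l
  proof -
    have P: "0 \<le> (1 + (Tw l)\<^sup>2) * norm (res l)" by simp
    consider "norm (res l) \<ge> 1" | "norm (res l) < 1" "normG * zdist l > smin_gap/2"
      | "normG * zdist l \<le> smin_gap/2" by linarith
    then obtain c where "0 \<le> c" "c \<le> 1 + K2 + K3"
      and c: "wnorm w (l - lbar l) \<le> c * ((1 + (Tw l)\<^sup>2) * norm (res l))"
    proof cases
      case 1 then show ?thesis using that[of 1] error_bound_large_residual K2 K3 by simp
    next
      case 2 then show ?thesis using that[of K2] error_bound_far[of l] K2 K3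
        by (simp add: K2_def mult.assoc)
    next
      case 3 then show ?thesis using that[of K3] error_bound_near[of l] K2 K3
        by (simp add: K3_def mult.assoc)
    qed
    then show ?thesis using mult_right_mono[OF _ P] by (meson order_trans)
  qed
  moreover have "1 + K2 + K3 > 0" using K2 K3 by simp
  ultimately show ?thesis by (metis mult.assoc)
qed

lemma error_bound:
  "\<exists>c1>0. \<exists>c2>0. \<forall>l. wnorm w (l - lbar l)
      \<le> (c1 + c2 * (Tw l)\<^sup>2) * wnorm w (proxres w eqr (graddual F G g) l)"
proof -
  obtain K where K: "K > 0" "\<And>l. wnorm w (l - lbar l) \<le> K * (1 + (Tw l)\<^sup>2) * norm (res l)"
    using error_bound_euclidean by blast
  define c where "c = K / sqrt wmin"
  have c: "c > 0" using K wmin_pos by (simp add: c_def)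
  have "wnorm w (l - lbar l) \<le> (c + c * (Tw l)\<^sup>2) * wnorm w (proxres w eqr (graddual F G g) l)" for l
  proof -
    have "K * (1 + (Tw l)\<^sup>2) * norm (res l) \<le> K * (1 + (Tw l)\<^sup>2) * (wnorm w (res l) / sqrt wmin)"
      using K(1) norm_le_wnorm[of "res l"] by (intro mult_left_mono) auto
    also have "\<dots> = (c + c * (Tw l)\<^sup>2) * wnorm w (res l)" by (simp add: c_def algebra_simps)
    finally show ?thesis using K(2)[of l] by (simp add: proxres_eq_res)
  qed
  then show ?thesis using c by blast
qed

end

text \<open>The main theorem: instantiate the weighted setting with \<open>W = Wdiag\<close>.\<close>
theorem theorem1:
  fixes F :: "'m::finite \<Rightarrow> real^'n \<Rightarrow> real"
    and blk :: "'n \<Rightarrow> 'm"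
    and \<sigma> Lf :: "'m \<Rightarrow> real"
    and G :: "real^'n^'r"
    and g :: "real^'r"
    and eqr :: "'r \<Rightarrow> bool"
    and rblk :: "'r \<Rightarrow> 'k::finite"
    and E :: "'k \<Rightarrow> 'm \<Rightarrow> bool"
  assumes sparsity: "\<And>j i r c. \<not> E j i \<Longrightarrow> rblk r = j \<Longrightarrow> blk c = i \<Longrightarrow> G $ r $ c = 0"
    and local_fi: "\<And>i. depends_only_on_block blk i (F i)"
    and sigma_pos: "\<And>i. \<sigma> i > 0"
    and strong_cvx: "\<And>i. block_strongly_convex blk i (\<sigma> i) (F i)"
    and lip_grad: "\<And>i. lipschitz_gradient (Lf i) (F i)"
    and A_full_row_rank: "\<And>v::real^'r. (\<forall>r. \<not> eqr r \<longrightarrow> v $ r = 0) \<Longrightarrow> v v* G = 0 \<Longrightarrow> v = 0"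
    and slater: "\<exists>z. \<forall>r. (eqr r \<longrightarrow> (G *v z) $ r = g $ r) \<and> (\<not> eqr r \<longrightarrow> (G *v z) $ r < g $ r)"
    and W_pos: "\<And>r. Wdiag G blk rblk E \<sigma> r > 0"
  shows "\<exists>c1 > 0. \<exists>c2 > 0. \<forall>l \<in> dualset eqr.
           (let w = Wdiag G blk rblk E \<sigma>;
                Lstar = dualopt F G g eqr
            in wnorm w (l - wproj w Lstar l)
               \<le> (c1 + c2 * (Tfun w Lstar l)\<^sup>2) * wnorm w (proxres w eqr (graddual F G g) l))"
proof -
  interpret weighted_dual_problem F blk \<sigma> Lf G g eqr "Wdiag G blk rblk E \<sigma>"
    by unfold_locales (use sigma_pos strong_cvx lip_grad A_full_row_rank slater W_pos in auto)
  show ?thesis using error_bound unfolding Let_def by blast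
qed

end
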